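(* Let $(W,S)$ be a Coxeter system with $S=D$ finite and $W$ infinite. Suppose $W(t)=R(t)/S(t)$ where $R(t)=\prod_{i=1}^m[n_i]$ for some integers $n_i\ge 2$ and $S(t)$ is a polynomial. Put $N=\deg R=\sum_{i=1}^m(n_i-1)$ and let $b_j$ denote the coefficient of $t^j$ in $S(t)$. Then $\deg S\le N$ and: (1) $\displaystyle b_N=(-1)^{|D|+1}-\sum_{X\subsetneq D,\ |W_X|=\infty}(-1)^{|X|}$; (2) if $W$ has no infinite proper special subgroup (e.g. $W$ is Lannér or irreducible affine), then $b_N=(-1)^{|D|+1}$; (3) if $W$ is $1$-terminal (in particular if $W$ is quasi-Lannér), then $b_N=(-1)^{|D|}(\mathrm{Inf}-1)$, where $\mathrm{Inf}$ is the number of subsets $X\subsetneq D$ with $W_X$ infinite.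
   Context: $[n]=1+t+\dots+t^{n-1}$. For $X\subseteq S$, $W_X$ is the special subgroup generated by $X$; $W(t)=\sum_{g\in W}t^{l(g)}$ is the Poincaré series with respect to word length. An infinite Coxeter group $W$ is called $1$-terminal if it has at least one infinite proper special subgroup, and no infinite proper special subgroup $W_X$ ($X\subsetneq S$) contains an infinite special subgroup $W_Y$ with $Y\subsetneq X$ (i.e. the longest chains $W=W_{X_0}\supsetneq W_{X_1}\supsetneq\cdots$ of infinite special subgroups have length $1$). Lannér: connected Coxeter diagram, neither spherical nor Euclidean, all proper connected subdiagrams spherical. Quasi-Lannér: connected, neither spherical nor Euclidean, all proper connected subdiagrams spherical or Euclidean, at least one Euclidean. *)

theory Defs
  imports "HOL-Computational_Algebra.Computational_Algebra"
begin

text \<open>Coxeter matrix on a finite set S: m s t :: nat, where 0 encodes infinity.\<close>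
definition coxeter_matrix :: "('a \<Rightarrow> 'a \<Rightarrow> nat) \<Rightarrow> 'a set \<Rightarrow> bool" where
  "coxeter_matrix m S \<longleftrightarrow> finite S \<and> (\<forall>s\<in>S. m s s = 1) \<and>
     (\<forall>s\<in>S. \<forall>t\<in>S. m s t = m t s) \<and> (\<forall>s\<in>S. \<forall>t\<in>S. s \<noteq> t \<longrightarrow> m s t \<noteq> 1)"

fun alt :: "'a \<Rightarrow> 'a \<Rightarrow> nat \<Rightarrow> 'a list" where
  "alt s t 0 = []"
| "alt s t (Suc k) = s # alt t s k"

definition cox_relators :: "('a \<Rightarrow> 'a \<Rightarrow> nat) \<Rightarrow> 'a set \<Rightarrow> 'a list set" where
  "cox_relators m S = {alt s t (2 * m s t) | s t. s \<in> S \<and> t \<in> S \<and> m s t \<noteq> 0}"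

definition cox_step :: "('a \<Rightarrow> 'a \<Rightarrow> nat) \<Rightarrow> 'a set \<Rightarrow> ('a list \<times> 'a list) set" where
  "cox_step m S = {(u @ r @ v, u @ v) | u r v. u \<in> lists S \<and> v \<in> lists S \<and> r \<in> cox_relators m S}"

text \<open>Word equality in the Coxeter group W = < S | (st)^{m(s,t)} > (a monoid presentation
  suffices since all generators are involutions).\<close>
definition cox_eq :: "('a \<Rightarrow> 'a \<Rightarrow> nat) \<Rightarrow> 'a set \<Rightarrow> ('a list \<times> 'a list) set" where
  "cox_eq m S = (cox_step m S \<union> (cox_step m S)\<inverse>)\<^sup>*"

text \<open>The group element represented by a word, as its class of words.\<close>
definition cox_elem :: "('a \<Rightarrow> 'a \<Rightarrow> nat) \<Rightarrow> 'a set \<Rightarrow> 'a list \<Rightarrow> 'a list set" where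
  "cox_elem m S w = {v. (w, v) \<in> cox_eq m S}"

definition special :: "('a \<Rightarrow> 'a \<Rightarrow> nat) \<Rightarrow> 'a set \<Rightarrow> 'a set \<Rightarrow> 'a list set set" where
  "special m S X = cox_elem m S ` lists X"

abbreviation coxW :: "('a \<Rightarrow> 'a \<Rightarrow> nat) \<Rightarrow> 'a set \<Rightarrow> 'a list set set" where
  "coxW m S \<equiv> special m S S"

definition word_length :: "'a list set \<Rightarrow> nat" where
  "word_length g = (LEAST k. \<exists>v\<in>g. length v = k)"

definition poincare :: "('a \<Rightarrow> 'a \<Rightarrow> nat) \<Rightarrow> 'a set \<Rightarrow> real fps" where
  "poincare m S = Abs_fps (\<lambda>k. of_nat (card {g \<in> coxW m S. word_length g = k}))"

definition qint :: "nat \<Rightarrow> real poly" where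
  "qint n = (\<Sum>i<n. monom 1 i)"

definition one_terminal :: "('a \<Rightarrow> 'a \<Rightarrow> nat) \<Rightarrow> 'a set \<Rightarrow> bool" where
  "one_terminal m S \<longleftrightarrow> infinite (coxW m S) \<and>
     (\<exists>X. X \<subset> S \<and> infinite (special m S X)) \<and>
     (\<forall>X. X \<subset> S \<and> infinite (special m S X) \<longrightarrow>
        \<not> (\<exists>Y. Y \<subset> X \<and> infinite (special m S Y)))"

end

theory Submission
  imports Defs
begin

(* Write 1/W(t) as the expansion of a proper rational function a(t)/b(t); its value at
   infinity (the coefficient of a at degree deg b, divided by the leading coefficient of b)
   turns out to be  v(D) = sum of (-1)^|X| over all X \<subseteq> D with W_X finite.  Since
   S(t) = R(t) * (1/W(t)) with R monic of degree N, comparing the top coefficients of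
   S b = R a gives  deg S \<le> N  and  b_N = v(D).  As the alternating sum over all X \<subseteq> D
   vanishes, v(D) equals minus the alternating sum over the X with W_X infinite, which gives
   (1); (2) and (3) are special cases, using that in a 1-terminal group every infinite proper
   special subgroup has |X| = |D| - 1.

   An element having every generator of X as a descent forces W_X to be finite; so for infinite
   W_X Steinberg's alternating sum of the series W_X^Y(t) vanishes, which expresses 1/W_X(t)
   through the 1/W_Y(t), Y \<subset> X, and by induction on X gives the value v(X) at infinity. *)

section \<open>Words: alternating words, reflection words and deletions\<close>

lemma alt_Suc_Suc: "alt s t (Suc (Suc k)) = s # t # alt s t k" by simp

lemma alt_add2: "alt s t (2*a + n) = alt s t (2*a) @ alt s t n"
  by (induction a) (auto simp: mult_2 numeral_2_eq_2 simp del: alt.simps(2)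
      simp add: alt_Suc_Suc[of s t] add.commute[of "Suc _"] add_Suc_right)

lemma alt_snoc: "alt s t (Suc n) = alt s t n @ [if even n then s else t]"
  by (induction n arbitrary: s t) auto

lemma rev_alt_even: "even n \<Longrightarrow> rev (alt s t n) = alt t s n"
proof (induction n arbitrary: s t rule: less_induct)
  case (less n)
  show ?case
  proof (cases n)
    case 0 then show ?thesis by simp
  next
    case (Suc k)
    then obtain j where k: "k = Suc j" using less.prems by (cases k) auto
    have "rev (alt s t n) = rev (alt s t j) @ [t, s]" using Suc k by simp
    also have "rev (alt s t j) = alt t s j" using less.IH[of j] less.prems Suc k by auto
    also have "alt t s j @ [t, s] = alt t s n"
      using Suc k less.prems alt_snoc[of t s j] alt_snoc[of t s "Suc j"] by auto
    finally show ?thesis .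
  qed
qed

lemma set_alt: "set (alt s t n) \<subseteq> {s, t}"
  by (induction n arbitrary: s t) auto

lemma length_alt[simp]: "length (alt s t n) = n"
  by (induction n arbitrary: s t) auto

lemma take_alt: "i \<le> n \<Longrightarrow> take i (alt s t n) = alt s t i"
  by (induction n arbitrary: s t i) (auto simp: take_Cons split: nat.splits)

lemma nth_alt: "i < n \<Longrightarrow> alt s t n ! i = (if even i then s else t)"
  by (induction n arbitrary: s t i) (auto simp: nth_Cons split: nat.splits)

lemma alt_odd: "alt s t (2*j+1) = alt s t j @ [if even j then s else t] @ rev (alt s t j)"
proof (induction j arbitrary: s t)
  case 0 then show ?case by simp
next
  case (Suc j)
  have "alt s t (2 * Suc j + 1) = s # alt t s (Suc (2*j+1))"
    by (simp only: mult_Suc_right add_Suc_right add_Suc alt.simps) simp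
  also have "\<dots> = s # alt t s (2*j+1) @ [s]" using alt_snoc[of t s "2*j+1"] by simp
  also have "\<dots> = s # alt t s j @ [if even j then t else s] @ rev (alt t s j) @ [s]"
    using Suc.IH[of t s] by simp
  also have "\<dots> = alt s t (Suc j) @ [if even (Suc j) then s else t] @ rev (alt s t (Suc j))"
    by (simp only: alt.simps) simp
  finally show ?case .
qed

text \<open>For a word \<open>w\<close>, \<open>refl_word w i\<close> is the palindromic word \<open>u x (rev u)\<close> of the
  reflection crossed at position \<open>i\<close> (where \<open>u\<close> is the prefix of length \<open>i\<close> and \<open>x\<close> the
  letter at position \<open>i\<close>), and \<open>del_at i w\<close> deletes the letter at position \<open>i\<close>.\<close>
definition refl_word :: "'a list \<Rightarrow> nat \<Rightarrow> 'a list" where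
  "refl_word w i = take i w @ [w!i] @ rev (take i w)"

definition del_at :: "nat \<Rightarrow> 'a list \<Rightarrow> 'a list" where
  "del_at i w = take i w @ drop (Suc i) w"

lemma refl_word_alt: "j < n \<Longrightarrow> refl_word (alt s t n) j = alt s t (2*j+1)"
  unfolding refl_word_def using alt_odd[of s t j] by (simp add: take_alt nth_alt del: alt.simps)

lemma refl_word_app1: "i < length a \<Longrightarrow> refl_word (a@b) i = refl_word a i"
  unfolding refl_word_def by (simp add: nth_append)

lemma refl_word_app2: "refl_word (a@b) (length a + j) = a @ refl_word b j @ rev a"
  unfolding refl_word_def by (simp add: nth_append)

lemma rev_refl_word[simp]: "rev (refl_word w i) = refl_word w i"
  unfolding refl_word_def by simp

lemma set_refl_word: "i < length w \<Longrightarrow> set (refl_word w i) \<subseteq> set w"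
  unfolding refl_word_def by (auto dest: in_set_takeD)

lemma length_del_at: "i < length w \<Longrightarrow> length (del_at i w) = length w - 1"
  unfolding del_at_def by simp

lemma del_at_lists: "w \<in> lists X \<Longrightarrow> del_at i w \<in> lists X"
  unfolding del_at_def by (auto dest: in_set_takeD in_set_dropD)

lemma del_at_app1: "i < length a \<Longrightarrow> del_at i (a@b) = del_at i a @ b"
  unfolding del_at_def by simp

lemma del_at_app2: "length a \<le> i \<Longrightarrow> del_at i (a@b) = a @ del_at (i - length a) b"
  unfolding del_at_def by (simp add: Suc_diff_le)

lemma nth_del_at1: "j < i \<Longrightarrow> i < length a \<Longrightarrow> del_at i a ! j = a ! j"
  unfolding del_at_def by (simp add: nth_append)

lemma nth_del_at2: "i \<le> j \<Longrightarrow> Suc j < length a \<Longrightarrow> del_at i a ! j = a ! Suc j"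
  unfolding del_at_def by (simp add: nth_append)

lemma rtrancl_sym_map:
  assumes step: "\<And>x y. (x, y) \<in> R \<Longrightarrow> (f x, f y) \<in> R" and xy: "(x, y) \<in> (R \<union> R\<inverse>)\<^sup>*"
  shows "(f x, f y) \<in> (R \<union> R\<inverse>)\<^sup>*"
  using xy
proof (induction rule: rtrancl_induct)
  case (step y z)
  then have "(f y, f z) \<in> R \<union> R\<inverse>" using assms(1) by blast
  then show ?case using step.IH by (rule rtrancl_into_rtrancl[rotated])
qed simp

lemma rtrancl_sym_invariant:
  assumes step: "\<And>x y. (x, y) \<in> R \<Longrightarrow> g x = g y" and xy: "(x, y) \<in> (R \<union> R\<inverse>)\<^sup>*"
  shows "g x = g y"
  using xy by (induction rule: rtrancl_induct) (auto dest: step)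

text \<open>Counting in a range of length \<open>2k\<close> with a predicate of period \<open>k\<close>; used to show that a
  relator crosses each reflection an even number of times.\<close>
lemma card_double:
  fixes P :: "nat \<Rightarrow> bool"
  assumes "\<And>j. j < k \<Longrightarrow> P (j + k) = P j"
  shows "card {j. j < 2*k \<and> P j} = 2 * card {j. j < k \<and> P j}"
proof -
  have eq: "{j. j < 2*k \<and> P j} = {j. j < k \<and> P j} \<union> (\<lambda>j. j + k) ` {j. j < k \<and> P j}"
  proof (rule set_eqI, rule iffI)
    fix i assume i: "i \<in> {j. j < 2*k \<and> P j}"
    show "i \<in> {j. j < k \<and> P j} \<union> (\<lambda>j. j + k) ` {j. j < k \<and> P j}"
    proof (cases "i < k")
      case False
      then obtain j where j: "i = j + k" by (metis le_add_diff_inverse2 not_less)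
      then show ?thesis using i assms[of j] by auto
    qed (use i in auto)
  qed (use assms in auto)
  have "card ({j. j < k \<and> P j} \<union> (\<lambda>j. j + k) ` {j. j < k \<and> P j})
     = card {j. j < k \<and> P j} + card ((\<lambda>j. j + k) ` {j. j < k \<and> P j})"
    by (rule card_Un_disjoint) auto
  also have "card ((\<lambda>j. j + k) ` {j. j < k \<and> P j}) = card {j. j < k \<and> P j}"
    by (rule card_image) (auto simp: inj_on_def)
  finally show ?thesis unfolding eq by simp
qed

section \<open>Generating functions, alternating sums and values at infinity\<close>

definition gen_fps :: "'b set \<Rightarrow> ('b \<Rightarrow> nat) \<Rightarrow> real fps" where
  "gen_fps A d = Abs_fps (\<lambda>n. real (card {a \<in> A. d a = n}))"

lemma gen_fps_product:
  assumes bij: "bij_betw f (A \<times> B) C"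
    and deg: "\<And>a b. a \<in> A \<Longrightarrow> b \<in> B \<Longrightarrow> dC (f (a, b)) = dA a + dB b"
    and finA: "\<And>n. finite {a \<in> A. dA a = n}" and finB: "\<And>n. finite {b \<in> B. dB b = n}"
  shows "gen_fps C dC = gen_fps A dA * gen_fps B dB"
proof (rule fps_ext)
  fix n
  define T where "T = (SIGMA i:{0..n}. {a \<in> A. dA a = i} \<times> {b \<in> B. dB b = n - i})"
  have inj: "inj_on f (A \<times> B)" and img: "f ` (A \<times> B) = C"
    using bij by (auto simp: bij_betw_def)
  have "bij_betw (\<lambda>(i, p). f p) T {c \<in> C. dC c = n}"
  proof (rule bij_betw_imageI)
    show "inj_on (\<lambda>(i, p). f p) T"
    proof (rule inj_onI)
      fix x y assume x: "x \<in> T" and y: "y \<in> T" and eq: "(\<lambda>(i, p). f p) x = (\<lambda>(i, p). f p) y"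
      obtain i a b where xi: "x = (i, a, b)" by (cases x) auto
      obtain j a' b' where yj: "y = (j, a', b')" by (cases y) auto
      have "(a, b) \<in> A \<times> B" "(a', b') \<in> A \<times> B" "i = dA a" "j = dA a'"
        using x y unfolding xi yj T_def by auto
      moreover have "f (a, b) = f (a', b')" using eq xi yj by simp
      ultimately show "x = y" using inj_onD[OF inj] xi yj by auto
    qed
    show "(\<lambda>(i, p). f p) ` T = {c \<in> C. dC c = n}"
    proof (intro equalityI subsetI)
      fix c assume "c \<in> (\<lambda>(i, p). f p) ` T"
      then obtain i a b where "c = f (a, b)" "a \<in> A" "b \<in> B" "dA a = i" "dB b = n - i" "i \<le> n"
        unfolding T_def by auto
      then show "c \<in> {c \<in> C. dC c = n}" using img deg by auto
    next
      fix c assume c: "c \<in> {c \<in> C. dC c = n}"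
      then obtain a b where ab: "a \<in> A" "b \<in> B" "c = f (a, b)" using img by blast
      then have "dA a + dB b = n" using c deg by simp
      then have "(dA a, (a, b)) \<in> T" using ab unfolding T_def by auto
      then show "c \<in> (\<lambda>(i, p). f p) ` T" using ab(3) by force
    qed
  qed
  then have "card {c \<in> C. dC c = n} = card T" by (simp add: bij_betw_same_card)
  also have "card T = (\<Sum>i=0..n. card {a \<in> A. dA a = i} * card {b \<in> B. dB b = n - i})"
    unfolding T_def using finA finB by (simp add: card_SigmaI card_cartesian_product)
  finally show "gen_fps C dC $ n = (gen_fps A dA * gen_fps B dB) $ n"
    unfolding gen_fps_def fps_mult_nth by simp
qed

lemma gen_fps_alternating:
  assumes finI: "finite I" and fin: "\<And>n. finite {g \<in> S. d g = n}"
    and zero: "\<And>g. g \<in> S \<Longrightarrow> (\<Sum>Y\<in>{Y \<in> I. P Y g}. c Y) = 0"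
  shows "(\<Sum>Y\<in>I. fps_const (c Y) * gen_fps {g \<in> S. P Y g} d) = 0"
proof (rule fps_ext)
  fix n
  let ?L = "{g \<in> S. d g = n}"
  have "c Y * real (card {g \<in> {g \<in> S. P Y g}. d g = n}) = (\<Sum>g\<in>?L. if P Y g then c Y else 0)" for Y
  proof -
    have "(\<Sum>g\<in>?L. if P Y g then c Y else 0) = (\<Sum>g\<in>{g \<in> ?L. P Y g}. c Y)"
      using sum.inter_filter[OF fin[of n], of "\<lambda>_. c Y" "P Y"] by simp
    also have "{g \<in> ?L. P Y g} = {g \<in> {g \<in> S. P Y g}. d g = n}" by auto
    finally show ?thesis by simp
  qed
  then have "(\<Sum>Y\<in>I. c Y * real (card {g \<in> {g \<in> S. P Y g}. d g = n}))
      = (\<Sum>Y\<in>I. \<Sum>g\<in>?L. if P Y g then c Y else 0)" by simp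
  also have "\<dots> = (\<Sum>g\<in>?L. \<Sum>Y\<in>I. if P Y g then c Y else 0)" by (rule sum.swap)
  also have "\<dots> = 0"
    using zero sum.inter_filter[OF finI, of c] by (intro sum.neutral) auto
  finally show "(\<Sum>Y\<in>I. fps_const (c Y) * gen_fps {g \<in> S. P Y g} d) $ n = 0 $ n"
    unfolding gen_fps_def by (simp add: fps_sum_nth)
qed

lemma sum_supersets_alt0: assumes "finite X" "Z \<subset> X"
  shows "(\<Sum>Y\<in>{Y. Y \<subseteq> X \<and> Z \<subseteq> Y}. (-1::real) ^ card Y) = 0"
proof -
  have f: "finite {Y. Y \<subseteq> X \<and> Z \<subseteq> Y}" using assms(1) by simp
  have "card {T. T \<subseteq> X \<and> Z \<subseteq> T \<and> even (card T)} = card {T. T \<subseteq> X \<and> Z \<subseteq> T \<and> odd (card T)}"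
    using card_subsupersets_even_odd[OF assms] .
  then have "card {x. x \<in> {Y. Y \<subseteq> X \<and> Z \<subseteq> Y} \<and> even (card x)} = card {x. x \<in> {Y. Y \<subseteq> X \<and> Z \<subseteq> Y} \<and> odd (card x)}"
    by simp
  then show ?thesis using sum_alternating_cancels[OF f, of card] by simp
qed

lemma sum_pow_alt0: assumes "finite S" "S \<noteq> {}" shows "(\<Sum>Y\<in>Pow S. (-1::real) ^ card Y) = 0"
  using sum_supersets_alt0[of S "{}"] assms by (auto simp: Pow_def)


text \<open>\<open>infval f c\<close>: the power series \<open>f\<close> is the expansion of a proper rational function
  \<open>a/b\<close> (\<open>b(0) \<noteq> 0\<close>, \<open>deg a \<le> deg b\<close>) whose value at infinity is \<open>c\<close>, i.e. the coefficient of \<open>a\<close>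
  in degree \<open>deg b\<close> is \<open>c\<close> times the leading coefficient of \<open>b\<close>.\<close>
definition infval :: "real fps \<Rightarrow> real \<Rightarrow> bool" where
  "infval f c \<longleftrightarrow> (\<exists>a b. coeff b 0 \<noteq> 0 \<and> f * fps_of_poly b = fps_of_poly a \<and> degree a \<le> degree b
      \<and> coeff a (degree b) = c * lead_coeff b)"

lemma coeff_mult_top:
  fixes a q :: "real poly"
  assumes "degree a \<le> n" shows "coeff (a*q) (n + degree q) = coeff a n * lead_coeff q"
proof (cases "degree a = n")
  case True then show ?thesis using coeff_mult_degree_sum[of a q] by simp
next
  case False
  then have lt: "degree a < n" using assms by simp
  then have "coeff a n = 0" by (simp add: coeff_eq_0)
  moreover have "degree (a*q) < n + degree q" using degree_mult_le[of a q] lt by simp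
  then have "coeff (a*q) (n + degree q) = 0" by (simp add: coeff_eq_0)
  ultimately show ?thesis by simp
qed

lemma infval_add: assumes "infval f c" "infval g d" shows "infval (f+g) (c+d)"
proof -
  obtain a b where ab: "coeff b 0 \<noteq> 0" "f * fps_of_poly b = fps_of_poly a" "degree a \<le> degree b"
      "coeff a (degree b) = c * lead_coeff b" using assms(1) unfolding infval_def by blast
  obtain a' b' where ab': "coeff b' 0 \<noteq> 0" "g * fps_of_poly b' = fps_of_poly a'" "degree a' \<le> degree b'"
      "coeff a' (degree b') = d * lead_coeff b'" using assms(2) unfolding infval_def by blast
  have b0: "b \<noteq> 0" "b' \<noteq> 0" using ab(1) ab'(1) by auto
  let ?A = "a*b' + a'*b" and ?B = "b*b'"
  have c1: "coeff ?B 0 \<noteq> 0" using ab(1) ab'(1) by (simp add: coeff_mult_0)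
  have c2: "(f+g) * fps_of_poly ?B = fps_of_poly ?A"
  proof -
    have "(f+g) * fps_of_poly ?B = (f * fps_of_poly b) * fps_of_poly b' + (g * fps_of_poly b') * fps_of_poly b"
      by (simp add: fps_of_poly_mult algebra_simps)
    also have "\<dots> = fps_of_poly ?A" using ab(2) ab'(2) by (simp add: fps_of_poly_mult fps_of_poly_add)
    finally show ?thesis .
  qed
  have dB: "degree ?B = degree b + degree b'" using degree_mult_eq[OF b0] .
  have d1: "degree (a*b') \<le> degree b + degree b'" using degree_mult_le[of a b'] ab(3) by simp
  have d2: "degree (a'*b) \<le> degree b + degree b'" using degree_mult_le[of a' b] ab'(3) by simp
  have c3: "degree ?A \<le> degree ?B" using degree_add_le[OF d1 d2] dB by simp
  have e1: "coeff (a*b') (degree b + degree b') = c * lead_coeff b * lead_coeff b'"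
    using coeff_mult_top[OF ab(3), of b'] ab(4) by simp
  have e2: "coeff (a'*b) (degree b + degree b') = d * lead_coeff b' * lead_coeff b"
    using coeff_mult_top[OF ab'(3), of b] ab'(4) by (simp add: add.commute)
  have lB: "lead_coeff ?B = lead_coeff b * lead_coeff b'" by (rule lead_coeff_mult)
  have "coeff ?A (degree ?B) = coeff (a*b') (degree b + degree b') + coeff (a'*b) (degree b + degree b')"
    unfolding dB by (simp only: coeff_add)
  also have "\<dots> = (c + d) * (lead_coeff b * lead_coeff b')" unfolding e1 e2 by (simp add: algebra_simps)
  finally have c4: "coeff ?A (degree ?B) = (c + d) * lead_coeff ?B" unfolding lB .
  show ?thesis unfolding infval_def using c1 c2 c3 c4 by blast
qed

lemma infval_scale: assumes "infval f c" shows "infval (fps_const k * f) (k*c)"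
proof -
  obtain a b where ab: "coeff b 0 \<noteq> 0" "f * fps_of_poly b = fps_of_poly a" "degree a \<le> degree b"
      "coeff a (degree b) = c * lead_coeff b" using assms(1) unfolding infval_def by blast
  have "fps_const k * f * fps_of_poly b = fps_of_poly (smult k a)"
    using ab(2) by (simp add: fps_of_poly_smult mult.assoc)
  moreover have "degree (smult k a) \<le> degree b" using ab(3) degree_smult_le order_trans by blast
  moreover have "coeff (smult k a) (degree b) = (k*c) * lead_coeff b" using ab(4) by simp
  ultimately show ?thesis unfolding infval_def using ab(1) by blast
qed

lemma infval_zero: "infval 0 0"
  unfolding infval_def by (intro exI[of _ 0] exI[of _ 1]) simp

lemma infval_sum: assumes "finite S" "\<And>Y. Y \<in> S \<Longrightarrow> infval (F Y) (c Y)" shows "infval (\<Sum>Y\<in>S. F Y) (\<Sum>Y\<in>S. c Y)"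
  using assms
proof (induction S rule: finite_induct)
  case empty then show ?case using infval_zero by simp
next
  case (insert x S)
  then show ?case using infval_add[of "F x" "c x"] by simp
qed

lemma infval_inv_poly: assumes "coeff p 0 = (1::real)"
  shows "infval (inverse (fps_of_poly p)) (if degree p = 0 then 1 else 0)"
proof -
  have "inverse (fps_of_poly p) * fps_of_poly p = fps_of_poly 1"
    using inverse_mult_eq_1[of "fps_of_poly p"] assms by simp
  moreover have "coeff (1::real poly) (degree p) = (if degree p = 0 then 1 else 0) * lead_coeff p"
  proof (cases "degree p = 0")
    case True then show ?thesis using assms by simp
  next
    case False then show ?thesis by (simp add: coeff_1)
  qed
  ultimately show ?thesis unfolding infval_def using assms by (intro exI[of _ 1] exI[of _ p]) simp
qed


text \<open>The key combinatorial identity behind the induction for \<open>1/W_X(t)\<close>: for a property \<open>P\<close>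
  of subsets failing for \<open>X\<close>, and \<open>v(Y)\<close> the alternating count of the subsets of \<open>Y\<close> with \<open>P\<close>,
  summing \<open>(-1)^|Y| v(Y)\<close> over the proper subsets \<open>Y\<close> of \<open>X\<close> gives \<open>-(-1)^|X| v(X)\<close>.\<close>
lemma alternating_subset_recursion:
  fixes P :: "'a set \<Rightarrow> bool"
  assumes fX: "finite X" and nP: "\<not> P X"
  shows "(\<Sum>Y\<in>Pow X - {X}. (-1::real) ^ card Y * (\<Sum>Z\<in>{Z \<in> Pow Y. P Z}. (-1) ^ card Z))
       = - ((-1) ^ card X) * (\<Sum>Z\<in>{Z \<in> Pow X. P Z}. (-1) ^ card Z)"
proof -
  let ?c = "\<lambda>Y. (-1::real) ^ card Y"
  let ?S = "Pow X - {X}" and ?F = "{Z \<in> Pow X. P Z}"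
  have fS: "finite ?S" and fF: "finite ?F" using fX by simp_all
  have "(\<Sum>Y\<in>?S. ?c Y * (\<Sum>Z\<in>{Z \<in> Pow Y. P Z}. ?c Z)) = (\<Sum>Y\<in>?S. \<Sum>Z\<in>{Z \<in> ?F. Z \<subseteq> Y}. ?c Y * ?c Z)"
  proof (rule sum.cong[OF refl])
    fix Y assume "Y \<in> ?S"
    then have "{Z \<in> Pow Y. P Z} = {Z \<in> ?F. Z \<subseteq> Y}" by auto
    then show "?c Y * (\<Sum>Z\<in>{Z \<in> Pow Y. P Z}. ?c Z) = (\<Sum>Z\<in>{Z \<in> ?F. Z \<subseteq> Y}. ?c Y * ?c Z)"
      by (simp add: sum_distrib_left)
  qed
  also have "\<dots> = (\<Sum>Z\<in>?F. \<Sum>Y\<in>{Y \<in> ?S. Z \<subseteq> Y}. ?c Y * ?c Z)"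
    by (rule sum.swap_restrict[OF fS fF])
  also have "\<dots> = (\<Sum>Z\<in>?F. - ?c X * ?c Z)"
  proof (rule sum.cong[OF refl])
    fix Z assume Z: "Z \<in> ?F"
    have ZX: "Z \<subset> X" using Z nP by auto
    have fT: "finite {Y. Y \<subseteq> X \<and> Z \<subseteq> Y}" using fX by simp
    have XT: "X \<in> {Y. Y \<subseteq> X \<and> Z \<subseteq> Y}" using ZX by auto
    have "{Y. Y \<subseteq> X \<and> Z \<subseteq> Y} - {X} = {Y \<in> ?S. Z \<subseteq> Y}" by auto
    then have "(\<Sum>Y\<in>{Y \<in> ?S. Z \<subseteq> Y}. ?c Y) = - ?c X"
      using sum.remove[OF fT XT, of ?c] sum_supersets_alt0[OF fX ZX] by simp
    then show "(\<Sum>Y\<in>{Y \<in> ?S. Z \<subseteq> Y}. ?c Y * ?c Z) = - ?c X * ?c Z"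
      by (simp add: sum_distrib_right[symmetric])
  qed
  also have "\<dots> = - ?c X * (\<Sum>Z\<in>?F. ?c Z)" by (simp add: sum_distrib_left)
  finally show ?thesis .
qed

text \<open>If \<open>S(t) P(t) = R(t)\<close> with \<open>R\<close> monic of degree \<open>N\<close> and \<open>1/P\<close> has value \<open>c\<close> at infinity,
  then \<open>deg S \<le> N\<close> and the coefficient of \<open>S\<close> in degree \<open>N\<close> is \<open>c\<close>: compare the top coefficients
  of \<open>S b = R a\<close>, where \<open>1/P = a/b\<close>.\<close>
lemma top_coeff_from_infval:
  fixes Sp R :: "real poly" and P :: "real fps"
  assumes quot: "fps_of_poly Sp * P = fps_of_poly R" and P0: "P $ 0 = 1"
    and inf: "infval (inverse P) c" and degR: "degree R = N" and lR: "lead_coeff R = 1"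
  shows "degree Sp \<le> N \<and> coeff Sp N = c"
proof -
  obtain a b where ab: "coeff b 0 \<noteq> 0" "inverse P * fps_of_poly b = fps_of_poly a"
      "degree a \<le> degree b" "coeff a (degree b) = c * lead_coeff b"
    using inf unfolding infval_def by blast
  have b0: "b \<noteq> 0" using ab(1) by auto
  have R0: "R \<noteq> 0" using lR by auto
  have "fps_of_poly Sp = fps_of_poly Sp * (P * inverse P)" using inverse_mult_eq_1'[of P] P0 by simp
  also have "\<dots> = fps_of_poly R * inverse P" using quot by (simp add: mult.assoc[symmetric])
  finally have "fps_of_poly (Sp * b) = fps_of_poly R * (inverse P * fps_of_poly b)"
    by (simp add: fps_of_poly_mult mult.assoc)
  also have "\<dots> = fps_of_poly (R * a)" using ab(2) by (simp add: fps_of_poly_mult)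
  finally have eq: "Sp * b = R * a" using fps_of_poly_eq_iff by blast
  have Sp0: "Sp \<noteq> 0" using quot R0 by (metis fps_of_poly_0 fps_of_poly_eq_iff mult_zero_left)
  have a0: "a \<noteq> 0" using eq Sp0 b0 by auto
  have "degree Sp + degree b = N + degree a"
    using eq degree_mult_eq[OF Sp0 b0] degree_mult_eq[OF R0 a0] degR by simp
  then have degSp: "degree Sp \<le> N" using ab(3) by simp
  have "coeff (Sp * b) (N + degree b) = coeff Sp N * lead_coeff b" using coeff_mult_top[OF degSp] .
  moreover have "coeff (R * a) (N + degree b) = c * lead_coeff b"
    using coeff_mult_top[OF ab(3), of R] ab(4) degR lR by (simp add: mult.commute add.commute)
  ultimately have "coeff Sp N = c" using eq b0 by simp
  then show ?thesis using degSp by simp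
qed

lemma coeff_qint: "coeff (qint n) i = (if i < n then 1 else 0)"
  unfolding qint_def by (simp add: coeff_sum coeff_monom)

lemma degree_qint: assumes "n \<ge> 1" shows "degree (qint n) = n - 1" "lead_coeff (qint n) = 1"
proof -
  have "degree (qint n) \<le> n - 1" by (rule degree_le) (auto simp: coeff_qint)
  moreover have "coeff (qint n) (n - 1) \<noteq> 0" using assms by (simp add: coeff_qint)
  then have "n - 1 \<le> degree (qint n)" by (rule le_degree)
  ultimately show d: "degree (qint n) = n - 1" by simp
  show "lead_coeff (qint n) = 1" unfolding d using assms by (simp add: coeff_qint)
qed

lemma prod_qint: assumes "\<forall>n\<in>set ns. n \<ge> 1"
  shows "degree (prod_list (map qint ns)) = (\<Sum>n\<leftarrow>ns. n - 1) \<and> lead_coeff (prod_list (map qint ns)) = 1"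
  using assms
proof (induction ns)
  case (Cons x ns)
  have x: "x \<ge> 1" using Cons.prems by simp
  have IH: "degree (prod_list (map qint ns)) = (\<Sum>n\<leftarrow>ns. n - 1)" "lead_coeff (prod_list (map qint ns)) = 1"
    using Cons by auto
  have nz1: "qint x \<noteq> 0" using degree_qint(2)[OF x] by auto
  have nz2: "prod_list (map qint ns) \<noteq> 0" using IH(2) by auto
  show ?case using degree_mult_eq[OF nz1 nz2] lead_coeff_mult[of "qint x" "prod_list (map qint ns)"]
      degree_qint[OF x] IH by simp
qed simp

section \<open>Word equality in a Coxeter group\<close>

locale coxeter =
  fixes m :: "'a \<Rightarrow> 'a \<Rightarrow> nat" and D :: "'a set"
  assumes cm: "coxeter_matrix m D"
begin

definition weq :: "'a list \<Rightarrow> 'a list \<Rightarrow> bool" where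
  "weq w v \<longleftrightarrow> (w, v) \<in> cox_eq m D"

lemma finD: "finite D" using cm unfolding coxeter_matrix_def by auto
lemma m_diag: "s \<in> D \<Longrightarrow> m s s = 1" using cm unfolding coxeter_matrix_def by auto
lemma m_sym: "s \<in> D \<Longrightarrow> t \<in> D \<Longrightarrow> m s t = m t s" using cm unfolding coxeter_matrix_def by auto

lemma weq_refl[simp]: "weq w w" unfolding weq_def cox_eq_def by simp

lemma weq_sym: "weq w v \<Longrightarrow> weq v w"
  unfolding weq_def cox_eq_def
  by (metis converse_Un converse_converse rtrancl_converseI sup_commute)

lemma weq_trans[trans]: "weq u v \<Longrightarrow> weq v w \<Longrightarrow> weq u w"
  unfolding weq_def cox_eq_def by (meson rtrancl_trans)

lemma weq_iff: "weq a b \<Longrightarrow> weq a r = weq b r"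
  using weq_sym weq_trans by blast

lemma relator_lists: "r \<in> cox_relators m D \<Longrightarrow> r \<in> lists D"
  unfolding cox_relators_def using set_alt by fastforce

lemma cox_stepE:
  assumes "(x, y) \<in> cox_step m D"
  obtains u r v where "x = u@r@v" "y = u@v" "u \<in> lists D" "v \<in> lists D" "r \<in> cox_relators m D"
  using assms unfolding cox_step_def by blast

lemma cox_stepI: "u \<in> lists D \<Longrightarrow> v \<in> lists D \<Longrightarrow> r \<in> cox_relators m D \<Longrightarrow> (u@r@v, u@v) \<in> cox_step m D"
  unfolding cox_step_def by blast

lemma weq_lists: "weq w v \<Longrightarrow> w \<in> lists D \<Longrightarrow> v \<in> lists D"
  unfolding weq_def cox_eq_def
proof (induction rule: rtrancl_induct)
  case (step y z)
  then show ?case by (auto elim!: cox_stepE dest!: relator_lists)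
qed simp

lemma weq_relator: "r \<in> cox_relators m D \<Longrightarrow> u \<in> lists D \<Longrightarrow> v \<in> lists D \<Longrightarrow> weq (u@r@v) (u@v)"
  unfolding weq_def cox_eq_def by (blast intro: cox_stepI)

lemma relator_weq: "r \<in> cox_relators m D \<Longrightarrow> weq r []"
  using weq_relator[of r "[]" "[]"] by simp

lemma weq_cong: assumes "weq w v" "a \<in> lists D" "b \<in> lists D" shows "weq (a@w@b) (a@v@b)"
proof -
  have "(a@x@b, a@y@b) \<in> cox_step m D" if step: "(x, y) \<in> cox_step m D" for x y
  proof -
    obtain u r v where xy: "x = u@r@v" "y = u@v"
      and uv: "u \<in> lists D" "v \<in> lists D" and r: "r \<in> cox_relators m D"
      by (rule cox_stepE[OF step])
    have "((a@u)@r@(v@b), (a@u)@(v@b)) \<in> cox_step m D" using uv assms(2,3) r by (intro cox_stepI) simp_all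
    then show ?thesis using xy by simp
  qed
  then show ?thesis using assms(1) unfolding weq_def cox_eq_def
    by (rule rtrancl_sym_map[where f = "\<lambda>x. a@x@b"])
qed

lemma weq_cong_l: "weq w v \<Longrightarrow> a \<in> lists D \<Longrightarrow> weq (a@w) (a@v)"
  using weq_cong[of w v a "[]"] by simp

lemma weq_cong_r: "weq w v \<Longrightarrow> b \<in> lists D \<Longrightarrow> weq (w@b) (v@b)"
  using weq_cong[of w v "[]" b] by simp

lemma weq_app: "weq w v \<Longrightarrow> weq w' v' \<Longrightarrow> w \<in> lists D \<Longrightarrow> w' \<in> lists D \<Longrightarrow> weq (w@w') (v@v')"
  by (meson weq_cong_l weq_cong_r weq_lists weq_trans)

lemma weq_square: "s \<in> D \<Longrightarrow> weq [s,s] []"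
proof -
  assume s: "s \<in> D"
  have "alt s s (2 * m s s) \<in> cox_relators m D" unfolding cox_relators_def mem_Collect_eq
    using s m_diag[OF s] by (intro exI[of _ s]) simp
  moreover have "alt s s (2 * m s s) = [s,s]" using m_diag[OF s] by (simp add: numeral_2_eq_2)
  ultimately show ?thesis using relator_weq by simp
qed

text \<open>The relators are closed under reversal, so reversal (the inverse map) respects equality.\<close>
lemma rev_relator: "r \<in> cox_relators m D \<Longrightarrow> rev r \<in> cox_relators m D"
proof -
  assume "r \<in> cox_relators m D"
  then obtain s t where st: "r = alt s t (2 * m s t)" "s \<in> D" "t \<in> D" "m s t \<noteq> 0"
    unfolding cox_relators_def by blast
  then have "rev r = alt t s (2 * m t s)" using rev_alt_even[of "2 * m s t" s t] m_sym by simp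
  then show ?thesis unfolding cox_relators_def mem_Collect_eq using st m_sym[of s t]
    by (intro exI[of _ t] exI[of _ s]) simp
qed

lemma weq_rev: assumes "weq w v" shows "weq (rev w) (rev v)"
proof -
  have "(rev x, rev y) \<in> cox_step m D" if step: "(x, y) \<in> cox_step m D" for x y
  proof -
    obtain u r v where xy: "x = u@r@v" "y = u@v"
      and uv: "u \<in> lists D" "v \<in> lists D" and r: "r \<in> cox_relators m D"
      by (rule cox_stepE[OF step])
    have "(rev v @ rev r @ rev u, rev v @ rev u) \<in> cox_step m D"
      using uv rev_relator[OF r] by (intro cox_stepI) (simp_all add: in_lists_conv_set)
    then show ?thesis using xy by simp
  qed
  then show ?thesis using assms unfolding weq_def cox_eq_def by (rule rtrancl_sym_map[where f = rev])
qed

lemma weq_inv: "w \<in> lists D \<Longrightarrow> weq (w @ rev w) []"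
proof (induction w)
  case (Cons x w)
  have "weq ([x] @ (w @ rev w) @ [x]) ([x] @ [] @ [x])"
    using Cons by (intro weq_cong) auto
  also have "weq ([x] @ [] @ [x]) []" using weq_square Cons by simp
  finally show ?case by simp
qed simp

lemma weq_inv': "w \<in> lists D \<Longrightarrow> weq (rev w @ w) []"
  using weq_inv[of "rev w"] by (simp add: in_lists_conv_set)

lemma weq_cancel_l: "weq (a@w) (a@v) \<Longrightarrow> a \<in> lists D \<Longrightarrow> w \<in> lists D \<Longrightarrow> weq w v"
proof -
  assume h: "weq (a@w) (a@v)" and a: "a \<in> lists D" and w: "w \<in> lists D"
  have v: "v \<in> lists D" using weq_lists[OF h] a w by simp
  have "weq w ((rev a @ a) @ w)" using weq_sym[OF weq_cong_r[OF weq_inv'[OF a] w]] by simp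
  also have "weq ((rev a @ a) @ w) (rev a @ (a @ v))"
    using weq_cong_l[OF h, of "rev a"] a by (simp add: in_lists_conv_set)
  also have "weq (rev a @ (a @ v)) v" using weq_cong_r[OF weq_inv'[OF a] v] by simp
  finally show ?thesis .
qed

text \<open>All relators have even length, so the parity of the length is an invariant of elements.\<close>
lemma weq_parity: assumes "weq w v" shows "even (length w) = even (length v)"
proof -
  have "even (length r)" if "r \<in> cox_relators m D" for r
    using that unfolding cox_relators_def by auto
  then have "even (length x) = even (length y)" if "(x, y) \<in> cox_step m D" for x y
    using that by (auto elim!: cox_stepE)
  then show ?thesis using assms unfolding weq_def cox_eq_def by (rule rtrancl_sym_invariant[where g = "\<lambda>w. even (length w)"])
qed

lemma cox_elem_weq: "cox_elem m D w = {v. weq w v}"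
  unfolding cox_elem_def weq_def by simp

lemma cox_elem_eq: "weq w v \<Longrightarrow> cox_elem m D w = cox_elem m D v"
  unfolding cox_elem_weq using weq_iff by blast

section \<open>Counting reflections: the deletion and exchange conditions\<close>

text \<open>Tits' argument.  The number of positions of a word at which a given reflection \<open>r\<close>
  is crossed has a parity depending only on the element represented; for a word crossing
  two equal reflections one can delete two letters, and a word crossing pairwise distinct
  reflections is reduced.\<close>

definition refl_count :: "'a list \<Rightarrow> 'a list \<Rightarrow> nat" where
  "refl_count w r = card {i. i < length w \<and> weq (refl_word w i) r}"

lemma refl_word_lists: "w \<in> lists D \<Longrightarrow> i < length w \<Longrightarrow> refl_word w i \<in> lists D"
  using set_refl_word by (auto simp: in_lists_conv_set)

lemma refl_count_append:
  "refl_count (a@b) r = refl_count a r + card {j. j < length b \<and> weq (a @ refl_word b j @ rev a) r}"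
proof -
  let ?A = "{i. i < length a \<and> weq (refl_word a i) r}"
  let ?B = "{j. j < length b \<and> weq (a @ refl_word b j @ rev a) r}"
  have eq: "{i. i < length (a@b) \<and> weq (refl_word (a@b) i) r} = ?A \<union> (\<lambda>j. length a + j) ` ?B"
  proof (rule set_eqI, rule iffI)
    fix i assume "i \<in> {i. i < length (a@b) \<and> weq (refl_word (a@b) i) r}"
    then have i: "i < length (a@b)" "weq (refl_word (a@b) i) r" by auto
    show "i \<in> ?A \<union> (\<lambda>j. length a + j) ` ?B"
    proof (cases "i < length a")
      case True then show ?thesis using i refl_word_app1[OF True, of b] by auto
    next
      case False
      then obtain j where j: "i = length a + j" by (metis le_add_diff_inverse not_less)
      then show ?thesis using i refl_word_app2[of a b j] by auto
    qed
  qed (auto simp add: refl_word_app1 refl_word_app2)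
  have "card (?A \<union> (\<lambda>j. length a + j) ` ?B) = card ?A + card ((\<lambda>j. length a + j) ` ?B)"
    by (rule card_Un_disjoint) auto
  also have "card ((\<lambda>j. length a + j) ` ?B) = card ?B" by (rule card_image) (auto simp: inj_on_def)
  finally show ?thesis unfolding refl_count_def eq .
qed

lemma weq_conj_relator:
  assumes rel: "rel \<in> cox_relators m D" and u: "u \<in> lists D" and x: "x \<in> lists D"
  shows "weq ((u@rel) @ x @ rev (u@rel)) (u @ x @ rev u)"
proof -
  have rel0: "weq rel []" using relator_weq[OF rel] .
  have rrel0: "weq (rev rel) []" using weq_rev[OF rel0] by simp
  have "x @ rev rel @ rev u \<in> lists D" "u @ x \<in> lists D" "rev u \<in> lists D"
    using u x relator_lists[OF rel] by (auto simp: in_lists_conv_set)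
  note lists = this
  have "weq (u @ rel @ (x @ rev rel @ rev u)) (u @ [] @ (x @ rev rel @ rev u))"
    using weq_cong[OF rel0 u lists(1)] .
  also have "u @ [] @ (x @ rev rel @ rev u) = (u @ x) @ rev rel @ rev u" by simp
  also have "weq ((u @ x) @ rev rel @ rev u) ((u @ x) @ [] @ rev u)"
    using weq_cong[OF rrel0 lists(2,3)] .
  finally show ?thesis by simp
qed

text \<open>A relator \<open>(s t)^k\<close> crosses each of its reflections exactly twice, at positions
  \<open>j\<close> and \<open>j + k\<close>.\<close>
lemma refl_word_relator_shift:
  assumes "j < k"
  shows "refl_word (alt s t (2*k)) (j + k) = alt s t (2*k) @ refl_word (alt s t (2*k)) j"
  using assms refl_word_alt[of "j + k" "2*k" s t] refl_word_alt[of j "2*k" s t]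
    alt_add2[of s t k "2*j+1"] by (simp add: algebra_simps)

lemma refl_count_step:
  assumes rel: "rel \<in> cox_relators m D" and u: "u \<in> lists D" and v: "v \<in> lists D"
  shows "even (refl_count (u@rel@v) r) = even (refl_count (u@v) r)"
proof -
  have relD: "rel \<in> lists D" using relator_lists[OF rel] .
  have same: "{j. j < length v \<and> weq ((u@rel) @ refl_word v j @ rev (u@rel)) r}
       = {j. j < length v \<and> weq (u @ refl_word v j @ rev u) r}"
    using weq_conj_relator[OF rel u refl_word_lists[OF v]] weq_iff by blast
  obtain s t where st: "rel = alt s t (2 * m s t)"
    using rel unfolding cox_relators_def by blast
  let ?k = "m s t"
  let ?P = "\<lambda>j. weq (u @ refl_word rel j @ rev u) r"
  have per: "?P (j + ?k) = ?P j" if j: "j < ?k" for j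
  proof -
    have "refl_word rel j \<in> lists D" using refl_word_lists[OF relD, of j] j st by simp
    then have "refl_word rel j @ rev u \<in> lists D" using u by (auto simp: in_lists_conv_set)
    then have "weq (u @ rel @ (refl_word rel j @ rev u)) (u @ [] @ (refl_word rel j @ rev u))"
      by (rule weq_cong[OF relator_weq[OF rel] u])
    then show ?thesis using refl_word_relator_shift[OF j, of s] st weq_iff by auto
  qed
  have "card {j. j < length rel \<and> ?P j} = 2 * card {j. j < ?k \<and> ?P j}"
    using card_double[of ?k ?P, OF per] st by simp
  then show ?thesis
    using refl_count_append[of "u@rel" v r] refl_count_append[of u rel r]
      refl_count_append[of u v r] same by simp
qed

lemma refl_count_parity: assumes "weq w w'" shows "even (refl_count w r) = even (refl_count w' r)"
proof -
  have "even (refl_count x r) = even (refl_count y r)" if "(x, y) \<in> cox_step m D" for x y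
    using that by (elim cox_stepE) (metis refl_count_step)
  then show ?thesis using assms unfolding weq_def cox_eq_def
    by (rule rtrancl_sym_invariant[where g = "\<lambda>w. even (refl_count w r)"])
qed

lemma weq_refl_del0: assumes a: "a \<in> lists D" and x: "x \<in> D" and b: "b \<in> lists D"
  shows "weq (refl_word (a@[x]@b) (length a) @ (a@[x]@b)) (del_at (length a) (a@[x]@b))"
proof -
  have r: "refl_word (a@[x]@b) (length a) = a@[x]@rev a"
    using refl_word_app2[of a "[x]@b" 0] by (simp add: refl_word_def)
  have d: "del_at (length a) (a@[x]@b) = a@b" by (simp add: del_at_def)
  have "refl_word (a@[x]@b) (length a) @ (a@[x]@b) = (a @ [x]) @ (rev a @ a) @ ([x] @ b)"
    using r by simp
  also have "weq \<dots> ((a @ [x]) @ [] @ ([x] @ b))"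
    by (rule weq_cong[OF weq_inv'[OF a]]) (use a x b in auto)
  also have "(a @ [x]) @ [] @ ([x] @ b) = a @ [x,x] @ b" by simp
  also have "weq \<dots> (a @ [] @ b)" by (rule weq_cong[OF weq_square[OF x] a b])
  finally show ?thesis using d by simp
qed

lemma weq_refl_del: assumes w: "w \<in> lists D" and i: "i < length w"
  shows "weq (refl_word w i @ w) (del_at i w)"
proof -
  let ?a = "take i w" and ?x = "w!i" and ?b = "drop (Suc i) w"
  have wd: "w = ?a @ [?x] @ ?b" using id_take_nth_drop[OF i] by simp
  have a: "?a \<in> lists D" and x: "?x \<in> D" and b: "?b \<in> lists D"
    using w i by (auto simp: in_lists_conv_set dest: in_set_takeD in_set_dropD)
  have l: "length ?a = i" using i by simp
  show ?thesis using weq_refl_del0[OF a x b] unfolding l wd[symmetric] .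
qed

lemma refl_word_sq: "w \<in> lists D \<Longrightarrow> i < length w \<Longrightarrow> weq (refl_word w i @ refl_word w i) []"
  using weq_inv[OF refl_word_lists, of w i] by simp

lemma weq_del2:
  assumes w: "w \<in> lists D" and ij: "i < j" "j < length w" and e: "weq (refl_word w i) (refl_word w j)"
  shows "weq w (del_at i (del_at j w))"
proof -
  have ri: "refl_word w i \<in> lists D" using refl_word_lists[OF w] ij by simp
  have rj: "refl_word w j \<in> lists D" using refl_word_lists[OF w] ij by simp
  have dj: "del_at j w \<in> lists D" using del_at_lists[OF w] .
  have r1a: "refl_word (del_at j w) i = refl_word (take j w) i"
    unfolding del_at_def using refl_word_app1[of i "take j w" "drop (Suc j) w"] ij by simp
  have r1b: "refl_word w i = refl_word (take j w) i"
    using refl_word_app1[of i "take j w" "drop j w"] ij by simp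
  have r1: "refl_word (del_at j w) i = refl_word w i" using r1a r1b by simp
  have "weq (refl_word w i @ refl_word w j) (refl_word w j @ refl_word w j)" using weq_cong_r[OF e rj] .
  also have "weq \<dots> []" using refl_word_sq[OF w] ij by simp
  finally have ij0: "weq (refl_word w i @ refl_word w j) []" .
  have "weq w ((refl_word w i @ refl_word w j) @ w)" using weq_cong_r[OF ij0 w] by (simp add: weq_sym)
  also have "(refl_word w i @ refl_word w j) @ w = refl_word w i @ (refl_word w j @ w)" by simp
  also have "weq \<dots> (refl_word w i @ del_at j w)" using weq_cong_l[OF weq_refl_del[OF w ij(2)] ri] .
  also have "weq \<dots> (del_at i (del_at j w))"
    using weq_refl_del[OF dj, of i] r1 ij length_del_at[of j w] by simp
  finally show ?thesis .
qed


definition reduced :: "'a list \<Rightarrow> bool" where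
  "reduced w \<longleftrightarrow> w \<in> lists D \<and> (\<forall>v. weq w v \<longrightarrow> length w \<le> length v)"

definition distinct_refls :: "'a list \<Rightarrow> bool" where
  "distinct_refls w \<longleftrightarrow>
     (\<forall>i j. i < length w \<longrightarrow> j < length w \<longrightarrow> weq (refl_word w i) (refl_word w j) \<longrightarrow> i = j)"

lemma reduced_lists: "reduced w \<Longrightarrow> w \<in> lists D" unfolding reduced_def by simp

lemma not_distinct_refls_pair:
  assumes "\<not> distinct_refls w"
  obtains i j where "i < j" "j < length w" "weq (refl_word w i) (refl_word w j)"
proof -
  obtain i j where ij: "i < length w" "j < length w" "weq (refl_word w i) (refl_word w j)" "i \<noteq> j"
    using assms unfolding distinct_refls_def by blast
  consider "i < j" | "j < i" using ij(4) by linarith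
  then show ?thesis using that ij weq_sym by cases blast+
qed

lemma not_distinct_refls_shorter:
  assumes w: "w \<in> lists X" and X: "X \<subseteq> D" and nd: "\<not> distinct_refls w"
  obtains v where "v \<in> lists X" "weq w v" "length v < length w"
proof -
  obtain i j where ij: "i < j" "j < length w" "weq (refl_word w i) (refl_word w j)"
    using not_distinct_refls_pair[OF nd] .
  have "w \<in> lists D" using w X lists_mono by blast
  then have "weq w (del_at i (del_at j w))" using weq_del2 ij by blast
  moreover have "length (del_at i (del_at j w)) < length w"
    using ij length_del_at[of j w] length_del_at[of i "del_at j w"] by simp
  moreover have "del_at i (del_at j w) \<in> lists X" using w by (intro del_at_lists)
  ultimately show ?thesis using that by blast
qed

lemma reduced_distinct_refls: assumes "reduced w" shows "distinct_refls w"
proof (rule ccontr)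
  assume "\<not> distinct_refls w"
  then obtain v where "weq w v" "length v < length w"
    using not_distinct_refls_shorter[of w D] reduced_lists[OF assms] by blast
  then show False using assms unfolding reduced_def by fastforce
qed

lemma refl_count_one: assumes "distinct_refls w" "i < length w" shows "refl_count w (refl_word w i) = 1"
proof -
  have "{j. j < length w \<and> weq (refl_word w j) (refl_word w i)} = {i}"
    using assms unfolding distinct_refls_def by auto
  then show ?thesis unfolding refl_count_def by simp
qed

text \<open>Each of the distinct reflections crossed by \<open>w\<close> is crossed an odd number of times by every
  equal word \<open>v\<close>, so \<open>v\<close> is at least as long as \<open>w\<close>.\<close>
lemma distinct_refls_le: assumes d: "distinct_refls w" and e: "weq w v"
  shows "length w \<le> length v"
proof -
  have ex: "\<exists>j. j < length v \<and> weq (refl_word v j) (refl_word w i)" if i: "i < length w" for i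
  proof -
    have "odd (refl_count v (refl_word w i))"
      using refl_count_parity[OF e, of "refl_word w i"] refl_count_one[OF d i] by simp
    then have "{j. j < length v \<and> weq (refl_word v j) (refl_word w i)} \<noteq> {}"
      unfolding refl_count_def by (metis card.empty even_zero)
    then show ?thesis by auto
  qed
  define g where "g i = (SOME j. j < length v \<and> weq (refl_word v j) (refl_word w i))" for i
  have g: "g i < length v \<and> weq (refl_word v (g i)) (refl_word w i)" if "i < length w" for i
    unfolding g_def using someI_ex[OF ex[OF that]] .
  have "inj_on g {..<length w}"
  proof (rule inj_onI)
    fix i j assume "i \<in> {..<length w}" "j \<in> {..<length w}" "g i = g j"
    then have "weq (refl_word w i) (refl_word w j)" using g by (metis weq_sym weq_trans lessThan_iff)
    then show "i = j" using d \<open>i \<in> _\<close> \<open>j \<in> _\<close> unfolding distinct_refls_def by auto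
  qed
  moreover have "g ` {..<length w} \<subseteq> {..<length v}" using g by auto
  ultimately have "card {..<length w} \<le> card {..<length v}" by (meson card_inj_on_le finite_lessThan)
  then show ?thesis by simp
qed

lemma distinct_refls_reduced: "w \<in> lists D \<Longrightarrow> distinct_refls w \<Longrightarrow> reduced w"
  unfolding reduced_def using distinct_refls_le[of w] by simp

lemma deletion: assumes "X \<subseteq> D" "w \<in> lists X" shows "\<exists>v \<in> lists X. reduced v \<and> weq w v"
  using assms(2)
proof (induction "length w" arbitrary: w rule: less_induct)
  case less
  show ?case
  proof (cases "reduced w")
    case False
    then have "\<not> distinct_refls w" using distinct_refls_reduced less.prems assms(1) lists_mono by blast
    then obtain v where "v \<in> lists X" "weq w v" "length v < length w"
      using not_distinct_refls_shorter less.prems assms(1) by blast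
    then show ?thesis using less.hyps weq_trans by blast
  qed (use less.prems weq_refl in blast)
qed

definition wlen :: "'a list \<Rightarrow> nat" where
  "wlen w = (LEAST k. \<exists>v. weq w v \<and> length v = k)"

lemma wlen_red: assumes "weq w v" "reduced v" shows "wlen w = length v"
  unfolding wlen_def
proof (rule Least_equality)
  show "\<exists>v'. weq w v' \<and> length v' = length v" using assms by blast
  fix k assume "\<exists>v'. weq w v' \<and> length v' = k"
  then obtain v' where "weq w v'" "length v' = k" by blast
  then have "weq v v'" using weq_trans[OF weq_sym[OF assms(1)]] by blast
  then show "length v \<le> k" using assms(2) \<open>length v' = k\<close> unfolding reduced_def by blast
qed

lemma reduced_wlen: "reduced w \<Longrightarrow> wlen w = length w" using wlen_red[of w w] by simp

lemma wlen_ex: assumes "X \<subseteq> D" "w \<in> lists X" shows "\<exists>v \<in> lists X. reduced v \<and> weq w v \<and> length v = wlen w"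
  using deletion[OF assms] wlen_red by fastforce

lemma wlen_exD: assumes "w \<in> lists D" shows "\<exists>v. reduced v \<and> weq w v \<and> length v = wlen w"
  using wlen_ex[of D w] assms by blast

lemma wlen_le: "wlen w \<le> length w"
  unfolding wlen_def by (rule Least_le) (rule exI[of _ w], simp)

lemma wlen_weq: assumes "weq w v" shows "wlen w = wlen v"
proof -
  have "\<And>x. weq w x = weq v x" using weq_iff[OF assms] .
  then show ?thesis unfolding wlen_def by simp
qed

lemma wlen_parity: assumes "w \<in> lists D" shows "even (wlen w) = even (length w)"
proof -
  obtain v where "reduced v" "weq w v" "length v = wlen w" using wlen_exD[OF assms] by blast
  then show ?thesis using weq_parity[of w v] by simp
qed

lemma wlen_0: assumes "w \<in> lists D" "wlen w = 0" shows "weq w []"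
proof -
  obtain v where "reduced v" "weq w v" "length v = wlen w" using wlen_exD[OF assms(1)] by blast
  then show ?thesis using assms(2) by simp
qed

lemma wlen_app: assumes "a \<in> lists D" "b \<in> lists D" shows "wlen (a@b) \<le> wlen a + wlen b"
proof -
  obtain a' where a': "reduced a'" "weq a a'" "length a' = wlen a" using wlen_exD[OF assms(1)] by blast
  obtain b' where b': "reduced b'" "weq b b'" "length b' = wlen b" using wlen_exD[OF assms(2)] by blast
  have "weq (a@b) (a'@b')" using weq_app[OF a'(2) b'(2) assms] .
  then have "wlen (a@b) = wlen (a'@b')" using wlen_weq by blast
  also have "\<dots> \<le> length (a'@b')" by (rule wlen_le)
  finally show ?thesis using a' b' by simp
qed

lemma wlen_rev: assumes "w \<in> lists D" shows "wlen (rev w) = wlen w"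
proof -
  have *: "wlen (rev x) \<le> wlen x" if xD: "x \<in> lists D" for x
  proof -
    obtain v where "reduced v" "weq x v" "length v = wlen x" using wlen_exD[OF xD] by blast
    then have "wlen (rev x) = wlen (rev v)" using wlen_weq[OF weq_rev] by blast
    also have "\<dots> \<le> length v" using wlen_le[of "rev v"] by simp
    finally show ?thesis using \<open>length v = wlen x\<close> by simp
  qed
  have "rev w \<in> lists D" using assms by (simp add: in_lists_conv_set)
  then show ?thesis using *[OF assms] *[of "rev w"] by simp
qed

lemma wlen_snoc: assumes w: "w \<in> lists D" and s: "s \<in> D"
  shows "wlen (w@[s]) = Suc (wlen w) \<or> Suc (wlen (w@[s])) = wlen w"
proof -
  have a: "wlen (w@[s]) \<le> Suc (wlen w)" using wlen_app[of w "[s]"] w s wlen_le[of "[s]"] by simp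
  have "weq w (w@[s]@[s])" using weq_cong_l[OF weq_square[OF s] w] by (simp add: weq_sym)
  then have "wlen w = wlen ((w@[s])@[s])" using wlen_weq by simp
  also have "\<dots> \<le> wlen (w@[s]) + wlen [s]" using wlen_app[of "w@[s]" "[s]"] w s by simp
  finally have b: "wlen w \<le> Suc (wlen (w@[s]))" using wlen_le[of "[s]"] by simp
  have "even (wlen (w@[s])) = even (wlen w + 1)" using wlen_parity[of "w@[s]"] wlen_parity[OF w] w s by simp
  then have "wlen (w@[s]) \<noteq> wlen w" by auto
  then show ?thesis using a b by linarith
qed

text \<open>The word \<open>w s\<close> crosses some reflection twice, necessarily at a position
  \<open>i\<close> of \<open>w\<close> and at the new last position; multiplying by that reflection deletes either.\<close>
lemma exchange: assumes w: "reduced w" and s: "s \<in> D" and nr: "\<not> reduced (w@[s])"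
  shows "\<exists>i < length w. weq (w@[s]) (del_at i w)"
proof -
  let ?x = "w@[s]"
  have wD: "w \<in> lists D" using w reduced_def by simp
  have xD: "?x \<in> lists D" using wD s by simp
  have "\<not> distinct_refls ?x" using distinct_refls_reduced[OF xD] nr by blast
  then obtain i' j' where ij': "i' < j'" "j' < length ?x" "weq (refl_word ?x i') (refl_word ?x j')"
    by (rule not_distinct_refls_pair)
  have dw: "distinct_refls w" using reduced_distinct_refls[OF w] .
  have j': "j' = length w"
  proof (rule ccontr)
    assume "j' \<noteq> length w"
    then have "j' < length w" using ij' by simp
    moreover have "i' < length w" using \<open>j' < length w\<close> ij'(1) by simp
    ultimately have "weq (refl_word w i') (refl_word w j')" using ij'(3) refl_word_app1[of i' w "[s]"] refl_word_app1[of j' w "[s]"] by simp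
    then have "i' = j'" using dw \<open>i' < length w\<close> \<open>j' < length w\<close> unfolding distinct_refls_def by blast
    then show False using ij'(1) by simp
  qed
  have i': "i' < length w" using ij' j' by simp
  have c1: "weq (refl_word ?x i' @ ?x) (refl_word ?x j' @ ?x)" using weq_cong_r[OF ij'(3) xD] .
  have c2: "weq (refl_word ?x i' @ ?x) (del_at i' ?x)" using weq_refl_del[OF xD] i' by simp
  have c3: "weq (refl_word ?x j' @ ?x) (del_at j' ?x)" using weq_refl_del[OF xD] ij' by simp
  have c4: "del_at i' ?x = del_at i' w @ [s]" using i' unfolding del_at_def by simp
  have c5: "del_at j' ?x = w" using j' unfolding del_at_def by simp
  have "weq (del_at i' w @ [s]) (refl_word ?x i' @ ?x)" using weq_sym[OF c2] c4 by simp
  also have "weq \<dots> (refl_word ?x j' @ ?x)" by (rule c1)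
  also have "weq \<dots> w" using c3 c5 by simp
  finally have e: "weq (del_at i' w @ [s]) w" .
  have dD: "del_at i' w \<in> lists D" using del_at_lists[OF wD] by blast
  have "weq (w@[s]) ((del_at i' w @ [s]) @ [s])" using weq_cong_r[OF weq_sym[OF e], of "[s]"] s by simp
  also have "(del_at i' w @ [s]) @ [s] = del_at i' w @ [s,s] @ []" by simp
  also have "weq \<dots> (del_at i' w @ [] @ [])" by (rule weq_cong[OF weq_square[OF s] dD]) simp
  finally show ?thesis using i' by auto
qed


lemma wlen_len_reduced: assumes "w \<in> lists D" "wlen w = length w" shows "reduced w"
  unfolding reduced_def
proof (intro conjI allI impI)
  show "w \<in> lists D" by fact
  fix v assume "weq w v"
  then have "wlen w = wlen v" by (rule wlen_weq)
  then show "length w \<le> length v" using assms(2) wlen_le[of v] by simp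
qed

lemma reduced_prefix: assumes "reduced (a@b)" shows "reduced a"
proof -
  have ab: "a \<in> lists D" "b \<in> lists D" using assms reduced_def by auto
  have "wlen a = length a"
  proof (rule ccontr)
    assume "wlen a \<noteq> length a"
    then have lt: "wlen a < length a" using wlen_le[of a] by simp
    obtain a' where a': "reduced a'" "weq a a'" "length a' = wlen a" using wlen_exD[OF ab(1)] by blast
    have "weq (a@b) (a'@b)" using weq_cong_r[OF a'(2) ab(2)] .
    then have "length (a@b) \<le> length (a'@b)" using assms reduced_def by blast
    then show False using lt a'(3) by simp
  qed
  then show ?thesis using wlen_len_reduced ab by blast
qed

lemma wlen_single: "s \<in> D \<Longrightarrow> wlen [s] = 1"
  using wlen_le[of "[s]"] wlen_parity[of "[s]"] by (cases "wlen [s]") auto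

section \<open>Descents and minimal coset representatives\<close>

definition descent :: "'a list \<Rightarrow> 'a \<Rightarrow> bool" where
  "descent w s \<longleftrightarrow> wlen (w@[s]) < wlen w"

definition min_rep :: "'a set \<Rightarrow> 'a list \<Rightarrow> bool" where
  "min_rep J g \<longleftrightarrow> (\<forall>y \<in> lists J. wlen g \<le> wlen (g@y))"

text \<open>For a minimal coset representative \<open>g = a\<close> (with \<open>a\<close> of minimal length), right
  multiplication by letters of \<open>J\<close> never allows to delete a letter of \<open>a\<close>: otherwise
  \<open>g (z s z\<inverse>)\<close> with \<open>z s z\<inverse> \<in> W_J\<close> would be shorter than \<open>g\<close>.\<close>
lemma min_rep_no_prefix_deletion:
  assumes J: "J \<subseteq> D" and mg: "min_rep J g" and a: "weq g a" "length a = wlen g" "a \<in> lists D"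
    and z1: "z1 \<in> lists J" and s: "s \<in> J" and i: "i < length a"
    and e: "weq ((a@z1)@[s]) (del_at i (a@z1))"
  shows False
proof -
  let ?y = "z1 @ [s] @ rev z1"
  have z1D: "z1 \<in> lists D" using z1 J lists_mono by blast
  have yJ: "?y \<in> lists J" using z1 s by (auto simp: in_lists_conv_set)
  have yD: "rev z1 \<in> lists D" using z1D by (simp add: in_lists_conv_set)
  have dD: "del_at i a \<in> lists D" using del_at_lists[OF a(3)] .
  have "weq (g @ ?y) (a @ ?y)" using weq_cong_r[OF a(1)] yJ J by (meson lists_mono subsetD)
  also have "a @ ?y = ((a@z1)@[s]) @ rev z1" by simp
  also have "weq \<dots> (del_at i (a@z1) @ rev z1)" using weq_cong_r[OF e yD] .
  also have "del_at i (a@z1) @ rev z1 = del_at i a @ (z1 @ rev z1) @ []" using del_at_app1[OF i] by simp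
  also have "weq \<dots> (del_at i a @ [] @ [])" by (rule weq_cong[OF weq_inv[OF z1D] dD]) simp
  finally have "weq (g @ ?y) (del_at i a)" by simp
  then have "wlen (g @ ?y) \<le> length (del_at i a)" using wlen_weq wlen_le by metis
  also have "\<dots> < wlen g" using length_del_at[OF i] i a(2) by simp
  moreover have "wlen g \<le> wlen (g @ ?y)" using mg yJ unfolding min_rep_def by blast
  ultimately show False by simp
qed

lemma reduced_suffix_no_deletion:
  assumes r: "reduced (z1@[s])" and aD: "a \<in> lists D"
    and i: "length a \<le> i" "i < length (a@z1)" and e: "weq ((a@z1)@[s]) (del_at i (a@z1))"
  shows False
proof -
  have z1D: "z1 @ [s] \<in> lists D" using reduced_lists[OF r] .
  have "weq (a @ (z1@[s])) (a @ del_at (i - length a) z1)" using e del_at_app2[OF i(1), of z1] by simp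
  then have "weq (z1@[s]) (del_at (i - length a) z1)" using weq_cancel_l aD z1D by blast
  moreover have "length (del_at (i - length a) z1) < length (z1@[s])"
    using length_del_at[of "i - length a" z1] i by simp
  ultimately show False using r unfolding reduced_def by fastforce
qed

lemma wlen_append_min_rep_reduced:
  assumes J: "J \<subseteq> D" and g: "g \<in> lists D" and mg: "min_rep J g"
  shows "reduced z \<Longrightarrow> z \<in> lists J \<Longrightarrow> wlen (g@z) = wlen g + length z"
proof (induction z rule: rev_induct)
  case Nil then show ?case by simp
next
  case (snoc s z1)
  have z1r: "reduced z1" using reduced_prefix snoc.prems(1) by blast
  have z1J: "z1 \<in> lists J" and sJ: "s \<in> J" using snoc.prems(2) by auto
  have z1D: "z1 \<in> lists D" and sD: "s \<in> D" using z1J sJ J by auto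
  have IH: "wlen (g@z1) = wlen g + length z1" using snoc.IH z1r z1J by blast
  have gz1: "g @ z1 \<in> lists D" using g z1D by simp
  from wlen_snoc[OF gz1 sD]
  show ?case
  proof
    assume "wlen ((g@z1)@[s]) = Suc (wlen (g@z1))"
    then show ?thesis using IH by simp
  next
    assume dec: "Suc (wlen ((g@z1)@[s])) = wlen (g@z1)"
    obtain a where a: "reduced a" "weq g a" "length a = wlen g" using wlen_exD[OF g] by blast
    have aD: "a \<in> lists D" using a reduced_def by simp
    have e1: "weq (g@z1) (a@z1)" using weq_cong_r[OF a(2) z1D] .
    have "wlen (a@z1) = length (a@z1)" using wlen_weq[OF e1] IH a(3) by simp
    then have az1: "reduced (a@z1)" using wlen_len_reduced aD z1D by simp
    have e2: "weq ((g@z1)@[s]) ((a@z1)@[s])" using weq_cong_r[OF e1, of "[s]"] sD by simp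
    have "\<not> reduced ((a@z1)@[s])"
    proof
      assume "reduced ((a@z1)@[s])"
      then have "wlen ((a@z1)@[s]) = length (a@z1) + 1" using reduced_wlen by simp
      then show False using wlen_weq[OF e2] dec IH a(3) by simp
    qed
    then obtain i where i: "i < length (a@z1)" "weq ((a@z1)@[s]) (del_at i (a@z1))"
      using exchange[OF az1 sD] by blast
    show ?thesis
    proof (cases "i < length a")
      case True
      then show ?thesis using min_rep_no_prefix_deletion[OF J mg a(2,3) aD z1J sJ _ i(2)] by blast
    next
      case False
      then show ?thesis using reduced_suffix_no_deletion[OF snoc.prems(1) aD _ i(1,2)] by simp
    qed
  qed
qed

lemma wlen_append_min_rep:
  assumes J: "J \<subseteq> D" and g: "g \<in> lists D" and mg: "min_rep J g" and z: "z \<in> lists J"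
  shows "wlen (g@z) = wlen g + wlen z"
proof -
  obtain z' where z': "z' \<in> lists J" "reduced z'" "weq z z'" "length z' = wlen z" using wlen_ex[OF J z] by blast
  have "weq (g@z) (g@z')" using weq_cong_l[OF z'(3) g] .
  then have "wlen (g@z) = wlen (g@z')" by (rule wlen_weq)
  also have "\<dots> = wlen g + length z'" using wlen_append_min_rep_reduced[OF J g mg z'(2) z'(1)] .
  finally show ?thesis using z'(4) by simp
qed

lemma min_rep_exists: assumes J: "J \<subseteq> D" and g: "g \<in> lists D" shows "\<exists>y \<in> lists J. min_rep J (g@y)"
proof -
  let ?P = "\<lambda>k. \<exists>y \<in> lists J. wlen (g@y) = k"
  have ex: "?P (wlen g)" by (rule bexI[of _ "[]"]) auto
  obtain y where y: "y \<in> lists J" "wlen (g@y) = (LEAST k. ?P k)" using LeastI_ex[of ?P] ex by blast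
  have "min_rep J (g@y)" unfolding min_rep_def
  proof
    fix y' assume "y' \<in> lists J"
    then have "?P (wlen (g@(y@y')))" using y(1) by (intro bexI[of _ "y@y'"]) auto
    then have "(LEAST k. ?P k) \<le> wlen (g@(y@y'))" by (rule Least_le)
    then show "wlen (g@y) \<le> wlen ((g@y)@y')" using y(2) by simp
  qed
  then show ?thesis using y(1) by blast
qed

lemma coset_decomp: assumes J: "J \<subseteq> X" "X \<subseteq> D" and g: "g \<in> lists X"
  shows "\<exists>g0 z. g0 \<in> lists X \<and> min_rep J g0 \<and> z \<in> lists J \<and> weq g (g0@z)"
proof -
  have gD: "g \<in> lists D" using g J by (meson lists_mono subsetD)
  obtain y where y: "y \<in> lists J" "min_rep J (g@y)" using min_rep_exists[OF _ gD] J by blast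
  have yD: "y \<in> lists D" using y J by (meson lists_mono subsetD order_trans)
  have "weq (g @ y @ rev y) (g @ [])" using weq_cong_l[OF weq_inv[OF yD] gD] .
  then have "weq g ((g@y) @ rev y)" by (simp add: weq_sym)
  moreover have "g@y \<in> lists X" using g y J by (auto simp: in_lists_conv_set)
  moreover have "rev y \<in> lists J" using y by (simp add: in_lists_conv_set)
  ultimately show ?thesis using y by blast
qed

lemma min_rep_weq: assumes J: "J \<subseteq> D" and e: "weq g g'" and mg: "min_rep J g" shows "min_rep J g'"
  unfolding min_rep_def
proof
  fix y assume y: "y \<in> lists J"
  then have yD: "y \<in> lists D" using J by (meson lists_mono subsetD)
  have "wlen g' = wlen g" using wlen_weq[OF e] by simp
  also have "\<dots> \<le> wlen (g@y)" using mg y min_rep_def by blast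
  also have "\<dots> = wlen (g'@y)" using wlen_weq[OF weq_cong_r[OF e yD]] .
  finally show "wlen g' \<le> wlen (g'@y)" .
qed

lemma no_descent_min_rep:
  assumes J: "J \<subseteq> D" and g: "g \<in> lists D" and nd: "\<forall>s\<in>J. \<not> descent g s"
  shows "min_rep J g"
proof -
  obtain g0 z where d: "g0 \<in> lists D" "min_rep J g0" "z \<in> lists J" "weq g (g0@z)"
    using coset_decomp[of J D g] J g by blast
  obtain z' where z': "z' \<in> lists J" "reduced z'" "weq z z'" "length z' = wlen z" using wlen_ex[OF J d(3)] by blast
  have zD: "z' \<in> lists D" using z' reduced_def by simp
  have e: "weq g (g0@z')" using weq_trans[OF d(4) weq_cong_l[OF z'(3) d(1)]] .
  show ?thesis
  proof (cases z' rule: rev_exhaust)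
    case Nil
    then have "weq g0 g" using weq_sym[OF e] by simp
    then show ?thesis using min_rep_weq[OF J _ d(2)] by blast
  next
    case (snoc z1 s)
    have sJ: "s \<in> J" and z1J: "z1 \<in> lists J" using z'(1) snoc by auto
    have sD: "s \<in> D" using sJ J by auto
    have z1D: "z1 \<in> lists D" using z1J J by (meson lists_mono subsetD)
    have "weq (g@[s]) ((g0@z1@[s])@[s])" using weq_cong_r[OF e, of "[s]"] sD snoc by simp
    also have "(g0@z1@[s])@[s] = (g0@z1) @ [s,s] @ []" by simp
    also have "weq \<dots> ((g0@z1) @ [] @ [])" by (rule weq_cong[OF weq_square[OF sD]]) (use d(1) z1D in auto)
    finally have e2: "weq (g@[s]) (g0@z1)" by simp
    have "wlen (g@[s]) = wlen (g0@z1)" using wlen_weq[OF e2] .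
    also have "\<dots> = wlen g0 + wlen z1" using wlen_append_min_rep[OF J d(1) d(2) z1J] .
    also have "\<dots> < wlen g0 + length z'" using wlen_le[of z1] snoc by simp
    also have "\<dots> = wlen (g0@z')" using wlen_append_min_rep[OF J d(1) d(2) z'(1)] z'(4) wlen_weq[OF z'(3)] by simp
    also have "\<dots> = wlen g" using wlen_weq[OF e] by simp
    finally have "descent g s" unfolding descent_def .
    then show ?thesis using nd sJ by blast
  qed
qed

lemma min_rep_no_descent: "min_rep J g \<Longrightarrow> s \<in> J \<Longrightarrow> \<not> descent g s"
  unfolding min_rep_def descent_def by (metis Cons_in_lists_iff lists.Nil not_le)

lemma min_rep_unique:
  assumes J: "J \<subseteq> D" and u: "u \<in> lists D" "min_rep J u" and u': "u' \<in> lists D" "min_rep J u'"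
    and v: "v \<in> lists J" and v': "v' \<in> lists J" and e: "weq (u@v) (u'@v')"
  shows "weq u u'"
proof -
  have vD: "v \<in> lists D" and v'D: "v' \<in> lists D" using v v' J by (meson lists_mono subsetD)+
  have gen: "weq b (a @ (x @ rev y))" if "a \<in> lists D" "b \<in> lists D" "x \<in> lists D" "y \<in> lists D" "weq (a@x) (b@y)"
    for a b x y
  proof -
    have "weq b (b @ y @ rev y)" using weq_cong_l[OF weq_inv[OF that(4)] that(2)] by (simp add: weq_sym)
    also have "b @ y @ rev y = (b @ y) @ rev y" by simp
    also have "weq \<dots> ((a @ x) @ rev y)" using weq_cong_r[OF weq_sym[OF that(5)]] that(4) by (simp add: in_lists_conv_set)
    finally show ?thesis by simp
  qed
  have e1: "weq u' (u @ (v @ rev v'))" using gen[OF u(1) u'(1) vD v'D e] .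
  have e2: "weq u (u' @ (v' @ rev v))" using gen[OF u'(1) u(1) v'D vD weq_sym[OF e]] .
  have y1: "v @ rev v' \<in> lists J" and y2: "v' @ rev v \<in> lists J" using v v' by (auto simp: in_lists_conv_set)
  have "wlen u' = wlen u + wlen (v @ rev v')" using wlen_weq[OF e1] wlen_append_min_rep[OF J u y1] by simp
  moreover have "wlen u = wlen u' + wlen (v' @ rev v)" using wlen_weq[OF e2] wlen_append_min_rep[OF J u' y2] by simp
  ultimately have "wlen (v @ rev v') = 0" by simp
  moreover have "v @ rev v' \<in> lists D" using vD v'D by (auto simp add: in_lists_conv_set)
  ultimately have "weq (v @ rev v') []" using wlen_0 by blast
  then have "weq (u @ (v @ rev v')) (u @ [])" using weq_cong_l u(1) by blast
  then show ?thesis using weq_trans[OF e1] weq_sym by simp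
qed


section \<open>Dihedral subgroups and longest elements\<close>

lemma weq_cancel_pair: "x \<in> D \<Longrightarrow> a \<in> lists D \<Longrightarrow> weq (x#x#a) a"
  using weq_cong[OF weq_square, of x "[]" a] by simp

lemma adjacent_letters_distinct: assumes a: "reduced a" and i: "Suc i < length a" shows "a!i \<noteq> a!Suc i"
proof
  assume eq: "a!i = a!Suc i"
  have aD: "a \<in> lists D" using reduced_lists[OF a] .
  let ?x = "a!i"
  have xD: "?x \<in> D" using aD i by (simp add: in_lists_conv_set)
  have "a = take i a @ [a!i] @ drop (Suc i) a" using id_take_nth_drop[of i a] i by simp
  also have "drop (Suc i) a = a!Suc i # drop (Suc (Suc i)) a" using Cons_nth_drop_Suc[OF i] by simp
  finally have ad: "a = take i a @ [?x,?x] @ drop (Suc (Suc i)) a" using eq by simp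
  have tD: "take i a \<in> lists D" "drop (Suc (Suc i)) a \<in> lists D" using aD
    by (auto simp: in_lists_conv_set dest: in_set_takeD in_set_dropD)
  have "weq (take i a @ [?x,?x] @ drop (Suc (Suc i)) a) (take i a @ [] @ drop (Suc (Suc i)) a)"
    by (rule weq_cong[OF weq_square[OF xD] tD])
  then have "weq a (take i a @ drop (Suc (Suc i)) a)" using ad by simp
  moreover have "length (take i a @ drop (Suc (Suc i)) a) < length a" using i by simp
  ultimately show False using a reduced_def by fastforce
qed

lemma weq_last_letter:
  assumes a: "a \<in> lists D" "a \<noteq> []" and t: "t \<in> D" and e: "weq (a@[t]) (butlast a)"
  shows "weq [last a] [t]"
proof -
  let ?e = "last a"
  have bD: "butlast a \<in> lists D" using a(1) by (auto simp: in_lists_conv_set dest: in_set_butlastD)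
  have eD: "?e \<in> D" using a by (auto simp: in_lists_conv_set)
  have split: "butlast a @ ([?e] @ [t]) = a @ [t]" using append_butlast_last_id[OF a(2)] by (metis append_assoc)
  have "weq (butlast a @ ([?e] @ [t])) (butlast a @ [])" unfolding split using e by simp
  then have eo: "weq [?e,t] []" using weq_cancel_l[OF _ bD] eD t by simp
  have "weq [?e] ([?e] @ [t,t])" using weq_cong_l[OF weq_square[OF t], of "[?e]"] eD by (simp add: weq_sym)
  also have "[?e] @ [t,t] = [?e,t] @ [t]" by simp
  also have "weq \<dots> ([] @ [t])" using weq_cong_r[OF eo, of "[t]"] t by simp
  finally show ?thesis by simp
qed

text \<open>A reduced word in two letters alternates, so deleting an interior letter creates two
  equal adjacent letters and never leaves a reduced word.\<close>
lemma alternating_del_interior: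
  assumes a: "reduced a" "a \<in> lists {s,r}" and d: "reduced (del_at i a)"
    and i: "0 < i" "Suc i < length a"
  shows False
proof -
  have in_sr: "a!k \<in> {s,r}" if "k < length a" for k using a(2) that by (auto simp: in_lists_conv_set)
  have i1: "Suc (i - 1) < length (del_at i a)" using i length_del_at[of i a] by simp
  have "del_at i a ! (i-1) \<noteq> del_at i a ! Suc (i-1)" using adjacent_letters_distinct[OF d i1] .
  moreover have "del_at i a ! (i-1) = a!(i-1)" using nth_del_at1[of "i-1" i a] i by simp
  moreover have "del_at i a ! Suc (i-1) = a ! Suc i" using nth_del_at2[of i i a] i by simp
  moreover have "a!(i-1) \<noteq> a!i" using adjacent_letters_distinct[OF a(1), of "i-1"] i by simp
  moreover have "a!i \<noteq> a!Suc i" using adjacent_letters_distinct[OF a(1), of i] i by simp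
  moreover have "a!(i-1) \<in> {s,r}" "a!i \<in> {s,r}" "a!Suc i \<in> {s,r}" using in_sr i by auto
  ultimately show False by auto
qed

text \<open>By the exchange
  condition \<open>a t\<close> is \<open>a\<close> with a letter deleted: deleting the last letter makes \<open>r\<close> and \<open>s\<close>
  equal, deleting the first one exhibits \<open>r a\<close> as shorter, and interior deletions are impossible.\<close>
lemma dihedral_reduced:
  assumes a: "reduced a" "a \<in> lists {s,r}" "a = s # a1" and sr: "s \<noteq> r" and sD: "s \<in> D" and rD: "r \<in> D"
    and t: "t \<in> {s,r}" "t \<noteq> last a" and lo: "wlen (a@[t]) < length a"
  shows "wlen (r#a) < length a"
proof -
  have aD: "a \<in> lists D" and a1D: "a1 \<in> lists D" and tD: "t \<in> D"
    using reduced_lists[OF a(1)] a(3) t sD rD by auto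
  have last_sr: "last a \<in> {s,r}" using a(2,3) by (auto simp: in_lists_conv_set)
  have "\<not> reduced (a@[t])" using reduced_wlen[of "a@[t]"] lo by auto
  then obtain i where i: "i < length a" "weq (a@[t]) (del_at i a)" using exchange[OF a(1) tD] by blast
  have "Suc (wlen (a@[t])) = length a" using wlen_snoc[OF aD tD] reduced_wlen[OF a(1)] lo by simp
  then have dred: "reduced (del_at i a)"
    using wlen_len_reduced[OF del_at_lists[OF aD]] wlen_weq[OF i(2)] length_del_at[OF i(1)] by simp
  consider "i = length a - 1" | "i = 0" "Suc i < length a" | "0 < i" "Suc i < length a"
    using i(1) by linarith
  then show ?thesis
  proof cases
    case 1
    then have "del_at i a = butlast a" using i unfolding del_at_def by (simp add: butlast_conv_take)
    then have "weq [last a] [t]" using weq_last_letter[OF aD _ tD] i(2) a(3) by simp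
    then have "weq [r] [s]" using t last_sr sr weq_sym by auto
    then have "weq (r#a) (s#s#a1)" using weq_cong_r[of "[r]" "[s]" a] aD a(3) by simp
    then show ?thesis using wlen_weq weq_cancel_pair[OF sD a1D] wlen_le[of a1] a(3)
      by (metis le_imp_less_Suc length_Cons weq_trans)
  next
    case 2
    obtain y a2 where a12: "a1 = y # a2" using 2 a(3) by (cases a1) auto
    have "y \<noteq> s" using adjacent_letters_distinct[OF a(1), of 0] 2 a(3) a12 by simp
    then have y: "y = r" using a(2,3) a12 by auto
    have "weq a (a @ [t,t])" using weq_cong_l[OF weq_square[OF tD] aD] by (simp add: weq_sym)
    also have "a @ [t,t] = (a@[t]) @ [t]" by simp
    also have "weq \<dots> (a1 @ [t])" using weq_cong_r[OF i(2), of "[t]"] 2 a(3) tD by (simp add: del_at_def)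
    finally have "weq (r#a) (r#r#(a2 @ [t]))" using weq_cong_l[of a "a1@[t]" "[r]"] rD a12 y by simp
    also have "weq \<dots> (a2 @ [t])" using weq_cancel_pair[OF rD] a1D a12 tD by simp
    finally show ?thesis using wlen_weq wlen_le[of "a2 @ [t]"] a(3) a12
      by (metis length_Cons le_less_trans length_append_singleton lessI)
  next
    case 3
    then show ?thesis using alternating_del_interior[OF a(1,2) dred] by blast
  qed
qed

lemma dihedral:
  assumes sD: "s \<in> D" and rD: "r \<in> D" and q: "q \<in> lists {s,r}" and ds: "descent q s" and dr: "descent q r"
  shows "wlen (r#q) < wlen q"
proof -
  have J: "{s,r} \<subseteq> D" using sD rD by simp
  obtain a where a: "a \<in> lists {s,r}" "reduced a" "weq q a" "length a = wlen q" using wlen_ex[OF J q] by blast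
  have "a \<noteq> []" using ds a unfolding descent_def by auto
  then obtain x0 a1 where a01: "a = x0 # a1" by (cases a) auto
  have a1D: "a1 \<in> lists D" and x0: "x0 \<in> {s,r}" using reduced_lists[OF a(2)] a(1) a01 by auto
  have "wlen (r#a) < length a"
  proof (cases "x0 = r")
    case True
    then show ?thesis using wlen_weq[OF weq_cancel_pair[OF rD a1D]] wlen_le[of a1] a01 by simp
  next
    case False
    then have x0s: "x0 = s" and sr: "s \<noteq> r" using x0 by auto
    define t where "t = (if last a = s then r else s)"
    have "last a \<in> {s,r}" using a(1) \<open>a \<noteq> []\<close> by (auto simp: in_lists_conv_set)
    then have t: "t \<in> {s,r}" "t \<noteq> last a" using sr unfolding t_def by auto
    have "descent q t" using ds dr t_def by simp
    then have "wlen (a@[t]) < length a"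
      using wlen_weq[OF weq_cong_r[OF a(3), of "[t]"]] t sD rD a(4) unfolding descent_def by auto
    then show ?thesis using dihedral_reduced[OF a(2,1) _ sr sD rD t] a01 x0s by simp
  qed
  then show ?thesis using wlen_weq[OF weq_cong_l[OF a(3), of "[r]"]] rD a(4) by simp
qed

text \<open>Suppose \<open>u \<in> W_X\<close> has every generator in \<open>X\<close> as a descent.  Then
  \<open>l(u w) = l(u) - l(w)\<close> for all \<open>w \<in> W_X\<close>, proved by induction on \<open>l(w)\<close>; in particular \<open>W_X\<close>
  is finite.  The induction step \<open>w \<mapsto> w r\<close> has to exclude that \<open>r\<close> is an ascent of \<open>u w\<close>;
  writing \<open>w = w\<^sub>1 s\<close>, both \<open>s\<close> and \<open>r\<close> would then be ascents of \<open>u w\<close>, and the dihedral lemma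
  applied in the coset \<open>w W_{s,r}\<close> shows that \<open>w r\<close> would be shorter than \<open>w\<close>.\<close>
context
  fixes X u
  assumes X: "X \<subseteq> D" and u: "u \<in> lists X" and all_desc: "\<forall>s\<in>X. descent u s"
begin

lemma longest_word_lists: "u \<in> lists D" using u X lists_mono by blast

lemma longest_ascent_pair:
  assumes IH: "\<And>v. v \<in> lists X \<Longrightarrow> wlen v \<le> n \<Longrightarrow> wlen (u@v) + wlen v = wlen u"
    and w: "reduced (w1@[s])" "w1@[s] \<in> lists X" "length (w1@[s]) = n" and r: "r \<in> X"
    and up: "wlen ((u@w1@[s])@[r]) = Suc (wlen (u@w1@[s]))"
  shows "min_rep {s,r} (u@w1@[s])"
proof -
  have sD: "s \<in> D" and rD: "r \<in> D" and w1X: "w1 \<in> lists X" using w(2) r X by auto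
  have w1D: "w1 \<in> lists D" using w1X X lists_mono by blast
  have w1r: "reduced w1" using reduced_prefix w(1) by blast
  have "wlen (u@w1@[s]) + n = wlen u" using IH[OF w(2)] reduced_wlen[OF w(1)] w(3) by simp
  moreover have "wlen (u@w1) + (n - 1) = wlen u" using IH[OF w1X] reduced_wlen[OF w1r] w(3) by simp
  moreover have "weq ((u@w1@[s])@[s]) (u@w1)"
    using weq_cong_l[OF weq_square[OF sD], of "u@w1"] longest_word_lists w1D by simp
  ultimately have "wlen ((u@w1@[s])@[s]) = Suc (wlen (u@w1@[s]))" using wlen_weq w(3) by fastforce
  then have "\<forall>x\<in>{s,r}. \<not> descent (u@w1@[s]) x" using up unfolding descent_def by auto
  then show ?thesis using no_descent_min_rep[of "{s,r}" "u@w1@[s]"] sD rD longest_word_lists w1D by simp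
qed

text \<open>With \<open>u w\<close> minimal in its coset modulo \<open>W_J\<close> and \<open>w = w\<^sub>0 z\<close> the coset factorisation of
  \<open>w\<close>, every generator in \<open>J\<close> is a descent of \<open>z\<inverse>\<close>: lengths are additive on both \<open>u w z\<inverse> y\<close>
  and \<open>w\<^sub>0 y\<close> (\<open>y \<in> W_J\<close>), while \<open>u w\<^sub>0 y\<close> has length \<open>l(u) - l(w\<^sub>0 y)\<close> by induction.\<close>
lemma longest_coset_tail_descents:
  assumes IH: "\<And>v. v \<in> lists X \<Longrightarrow> wlen v \<le> n \<Longrightarrow> wlen (u@v) + wlen v = wlen u"
    and J: "J \<subseteq> X" and my: "min_rep J (u@w)" and w: "w \<in> lists X" "wlen w \<le> n"
    and dc: "w0 \<in> lists X" "min_rep J w0" "z \<in> lists J" "weq w (w0@z)" and lw0: "wlen w0 < n"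
    and x: "x \<in> J"
  shows "descent (rev z) x"
proof -
  have JD: "J \<subseteq> D" using J X by simp
  have wD: "w \<in> lists D" and w0D: "w0 \<in> lists D" and zD: "z \<in> lists D" and xD: "x \<in> D"
    using w(1) dc(1,3) x J X lists_mono by blast+
  have uwD: "u@w \<in> lists D" using longest_word_lists wD by simp
  have rzD: "rev z \<in> lists D" "rev z \<in> lists J" using zD dc(3) by (auto simp: in_lists_conv_set)
  have "weq ((u@w) @ rev z) ((u@(w0@z)) @ rev z)"
    using weq_cong[OF dc(4), of u "rev z"] longest_word_lists rzD by simp
  also have "(u@(w0@z)) @ rev z = (u@w0) @ (z @ rev z) @ []" by simp
  also have "weq \<dots> ((u@w0) @ [] @ [])" by (rule weq_cong[OF weq_inv[OF zD]]) (use longest_word_lists w0D in auto)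
  finally have e1: "weq (u@w0) ((u@w) @ rev z)" using weq_sym by simp
  have e2: "weq (u@w0@[x]) ((u@w) @ (rev z @ [x]))" using weq_cong_r[OF e1, of "[x]"] xD by simp
  have gw0: "wlen (u@w0) + wlen w0 = wlen u" using IH[OF dc(1)] lw0 by simp
  have l1: "wlen (w0@[x]) = wlen w0 + 1"
    using wlen_append_min_rep[OF JD w0D dc(2), of "[x]"] x wlen_single[OF xD] by simp
  have gx: "wlen (u@(w0@[x])) + wlen w0 + 1 = wlen u" using IH[of "w0@[x]"] dc(1) x J l1 lw0 by auto
  have "wlen ((u@w) @ rev z) = wlen (u@w) + wlen (rev z)" using wlen_append_min_rep[OF JD uwD my rzD(2)] .
  moreover have "wlen ((u@w) @ (rev z @ [x])) = wlen (u@w) + wlen (rev z @ [x])"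
    using wlen_append_min_rep[OF JD uwD my] rzD(2) x by simp
  ultimately have "wlen (rev z @ [x]) + 1 = wlen (rev z)"
    using wlen_weq[OF e1] wlen_weq[OF e2] gx gw0 by simp
  then show ?thesis unfolding descent_def by simp
qed

lemma longest_step:
  assumes IH: "\<And>v. v \<in> lists X \<Longrightarrow> wlen v \<le> n \<Longrightarrow> wlen (u@v) + wlen v = wlen u"
    and w: "reduced w" "w \<in> lists X" "length w = n" and r: "r \<in> X" and wr: "reduced (w@[r])"
  shows "wlen (u@(w@[r])) + Suc n = wlen u"
proof -
  have wD: "w \<in> lists D" and rD: "r \<in> D" using reduced_lists[OF w(1)] r X by auto
  have lw: "wlen w = n" using reduced_wlen[OF w(1)] w(3) by simp
  have gw: "wlen (u@w) + n = wlen u" using IH[OF w(2)] lw by simp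
  from wlen_snoc[of "u@w" r] longest_word_lists wD rD consider
    (down) "Suc (wlen ((u@w)@[r])) = wlen (u@w)" | (up) "wlen ((u@w)@[r]) = Suc (wlen (u@w))" by auto
  then show ?thesis
  proof cases
    case down then show ?thesis using gw by simp
  next
    case up
    have "w \<noteq> []" using up all_desc r unfolding descent_def by auto
    then obtain w1 s where ws: "w = w1@[s]" by (cases w rule: rev_exhaust) auto
    have sX: "s \<in> X" and sD: "s \<in> D" using w(2) ws X by auto
    define J where "J = {s, r}"
    have JX: "J \<subseteq> X" and JD: "J \<subseteq> D" using sX r X J_def by auto
    have my: "min_rep J (u@w)" using longest_ascent_pair[OF IH] w r up ws J_def by simp
    obtain w0 z where dc: "w0 \<in> lists X" "min_rep J w0" "z \<in> lists J" "weq w (w0@z)"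
      using coset_decomp[OF JX X w(2)] by blast
    have w0D: "w0 \<in> lists D" and zD: "z \<in> lists D" using dc(1,3) JX X lists_mono by blast+
    have lwz: "wlen w = wlen w0 + wlen z" using wlen_weq[OF dc(4)] wlen_append_min_rep[OF JD w0D dc(2) dc(3)] by simp
    have "descent w s" using reduced_prefix[of w1 "[s]"] w(1) ws weq_cong_l[OF weq_square[OF sD], of w1]
      reduced_wlen wlen_weq reduced_lists unfolding descent_def by (metis append_assoc append_Cons
          append_Nil append_Nil2 length_append_singleton lessI)
    then have "wlen z \<noteq> 0"
      using wlen_0[OF zD] weq_cong_l[of z "[]" w0] w0D dc(4) min_rep_weq[OF JD _ dc(2)]
        min_rep_no_descent J_def weq_trans weq_sym by (metis append_Nil2 insertI1)
    then have lw0: "wlen w0 < n" using lwz lw by simp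
    have "\<forall>x\<in>J. descent (rev z) x"
      using longest_coset_tail_descents[OF IH JX my w(2) _ dc lw0] lw by simp
    then have "wlen (r # rev z) < wlen (rev z)"
      using dihedral[OF sD rD, of "rev z"] dc(3) J_def by (simp add: in_lists_conv_set)
    then have lzr: "wlen (z@[r]) < wlen z" using wlen_rev[of "z@[r]"] wlen_rev[OF zD] zD rD by simp
    have "weq (w@[r]) (w0@(z@[r]))" using weq_cong_r[OF dc(4), of "[r]"] rD by simp
    then have "wlen (w@[r]) = wlen w0 + wlen (z@[r])"
      using wlen_weq wlen_append_min_rep[OF JD w0D dc(2), of "z@[r]"] dc(3) J_def r by simp
    then show ?thesis using lzr lwz lw reduced_wlen[OF wr] w(3) by simp
  qed
qed

lemma longest_len: "w \<in> lists X \<Longrightarrow> wlen (u@w) + wlen w = wlen u"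
proof (induction "wlen w" arbitrary: w rule: less_induct)
  case less
  obtain v where v: "v \<in> lists X" "reduced v" "weq w v" "length v = wlen w"
    using wlen_ex[OF X less.prems] by blast
  have "wlen (u@v) + length v = wlen u"
  proof (cases v rule: rev_exhaust)
    case Nil then show ?thesis by simp
  next
    case (snoc v1 r)
    have "wlen (u@(v1@[r])) + Suc (length v1) = wlen u"
    proof (rule longest_step)
      show "wlen (u@y) + wlen y = wlen u" if "y \<in> lists X" "wlen y \<le> length v1" for y
        using less.hyps[OF _ that(1)] that(2) v(4) snoc by simp
    qed (use v snoc reduced_prefix in auto)
    then show ?thesis using snoc by simp
  qed
  moreover have "weq (u@w) (u@v)" using weq_cong_l[OF v(3) longest_word_lists] .
  ultimately show ?case using wlen_weq v(4) by simp
qed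

lemma longest_finite: "finite (special m D X)"
proof -
  have fX: "finite X" using X finD finite_subset by blast
  have "special m D X \<subseteq> cox_elem m D ` {xs. set xs \<subseteq> X \<and> length xs \<le> wlen u}"
  proof
    fix g assume "g \<in> special m D X"
    then obtain w where w: "w \<in> lists X" "g = cox_elem m D w" unfolding special_def by blast
    obtain v where v: "v \<in> lists X" "weq w v" "length v = wlen w" using wlen_ex[OF X w(1)] by blast
    have "length v \<le> wlen u" using longest_len[OF w(1)] v(3) by simp
    moreover have "g = cox_elem m D v" using w(2) cox_elem_eq[OF v(2)] by simp
    ultimately show "g \<in> cox_elem m D ` {xs. set xs \<subseteq> X \<and> length xs \<le> wlen u}"
      using v(1) by (auto simp: in_lists_conv_set)
  qed
  moreover have "finite (cox_elem m D ` {xs. set xs \<subseteq> X \<and> length xs \<le> wlen u})"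
    using finite_lists_length_le[OF fX] by blast
  ultimately show ?thesis using finite_subset by blast
qed

end

section \<open>Poincare series of special subgroups\<close>

abbreviation elem :: "'a list \<Rightarrow> 'a list set" where "elem \<equiv> cox_elem m D"

lemma elem_eq_iff: "elem w = elem v \<longleftrightarrow> weq w v"
proof
  assume "elem w = elem v"
  then have "w \<in> elem v" unfolding cox_elem_weq using weq_refl by blast
  then show "weq w v" unfolding cox_elem_weq using weq_sym by blast
qed (rule cox_elem_eq)

lemma word_length_elem: "word_length (elem w) = wlen w"
  unfolding word_length_def wlen_def cox_elem_weq by simp

lemma special_mem: "g \<in> special m D X \<longleftrightarrow> (\<exists>w\<in>lists X. g = elem w)"
  unfolding special_def by blast

lemma special_mono: "Y \<subseteq> X \<Longrightarrow> special m D Y \<subseteq> special m D X"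
  unfolding special_def by (meson image_mono lists_mono)

lemma special_empty: "special m D {} = {elem []}"
  unfolding special_def by (simp add: lists_empty)

definition elem_mult :: "'a list set \<Rightarrow> 'a list set \<Rightarrow> 'a list set" where
  "elem_mult g h = {x. \<exists>u\<in>g. \<exists>v\<in>h. weq (u@v) x}"

lemma elem_mult_elem:
  assumes "u0 \<in> lists D" "v0 \<in> lists D" shows "elem_mult (elem u0) (elem v0) = elem (u0@v0)"
proof (rule set_eqI, rule iffI)
  fix x assume "x \<in> elem_mult (elem u0) (elem v0)"
  then obtain u v where uv: "weq u0 u" "weq v0 v" "weq (u@v) x" unfolding elem_mult_def cox_elem_weq by blast
  have "weq (u0@v0) (u@v)" using weq_app[OF uv(1,2) assms] .
  then show "x \<in> elem (u0@v0)" unfolding cox_elem_weq using weq_trans uv(3) by blast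
next
  fix x assume "x \<in> elem (u0@v0)"
  then show "x \<in> elem_mult (elem u0) (elem v0)" unfolding elem_mult_def cox_elem_weq
    by (intro CollectI bexI[of _ u0] bexI[of _ v0]) auto
qed

definition no_descent_in :: "'a set \<Rightarrow> 'a list set \<Rightarrow> bool" where
  "no_descent_in Y g \<longleftrightarrow> (\<exists>w\<in>lists D. g = elem w \<and> (\<forall>s\<in>Y. \<not> descent w s))"

lemma descent_weq: assumes "weq w w'" "s \<in> D" shows "descent w s = descent w' s"
  using wlen_weq[OF weq_cong_r[OF assms(1)]] wlen_weq[OF assms(1)] assms(2)
  unfolding descent_def by simp

lemma no_descent_in_elem:
  assumes "w \<in> lists D" "Y \<subseteq> D" shows "no_descent_in Y (elem w) \<longleftrightarrow> (\<forall>s\<in>Y. \<not> descent w s)"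
  using assms descent_weq elem_eq_iff unfolding no_descent_in_def by blast

definition poinc :: "'a set \<Rightarrow> real fps" where
  "poinc X = gen_fps (special m D X) word_length"

definition poinc_min :: "'a set \<Rightarrow> 'a set \<Rightarrow> real fps" where
  "poinc_min X Y = gen_fps {g \<in> special m D X. no_descent_in Y g} word_length"

lemma poincare_poinc: "poincare m D = poinc D"
  unfolding poincare_def poinc_def gen_fps_def by simp

lemma special_level_mem:
  "g \<in> {g \<in> special m D X. word_length g = n} \<longleftrightarrow> (\<exists>w\<in>lists X. g = elem w \<and> wlen w = n)"
proof
  assume "g \<in> {g \<in> special m D X. word_length g = n}"
  then obtain w where w: "w \<in> lists X" "g = elem w" "word_length g = n" unfolding special_mem by blast
  then have "wlen w = n" using word_length_elem by simp
  then show "\<exists>w\<in>lists X. g = elem w \<and> wlen w = n" using w by blast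
next
  assume "\<exists>w\<in>lists X. g = elem w \<and> wlen w = n"
  then obtain w where "w \<in> lists X" "g = elem w" "wlen w = n" by blast
  then show "g \<in> {g \<in> special m D X. word_length g = n}"
    unfolding special_mem using word_length_elem by blast
qed

lemma special_level_finite:
  assumes "X \<subseteq> D" shows "finite {g \<in> special m D X. word_length g = n}"
proof -
  have "{g \<in> special m D X. word_length g = n} \<subseteq> elem ` {xs. set xs \<subseteq> D \<and> length xs = n}"
  proof
    fix g assume "g \<in> {g \<in> special m D X. word_length g = n}"
    then obtain w where w: "w \<in> lists X" "g = elem w" "wlen w = n" unfolding special_level_mem by blast
    obtain v where v: "v \<in> lists X" "weq w v" "length v = wlen w" using wlen_ex[OF assms w(1)] by blast
    have "g = elem v" using w(2) cox_elem_eq[OF v(2)] by simp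
    moreover have "v \<in> {xs. set xs \<subseteq> D \<and> length xs = n}" using v w(3) assms
      by (auto simp: in_lists_conv_set)
    ultimately show "g \<in> elem ` {xs. set xs \<subseteq> D \<and> length xs = n}" by blast
  qed
  moreover have "finite (elem ` {xs. set xs \<subseteq> D \<and> length xs = n})"
    by (rule finite_imageI[OF finite_lists_length_eq[OF finD]])
  ultimately show ?thesis by (rule finite_subset)
qed

lemma poinc_0: assumes "X \<subseteq> D" shows "poinc X $ 0 = 1"
proof -
  have "{g \<in> special m D X. word_length g = 0} = {elem []}"
  proof (rule set_eqI)
    fix g
    have "w \<in> lists X \<Longrightarrow> wlen w = 0 \<Longrightarrow> weq w []" for w
      using wlen_0 assms lists_mono by blast
    then show "g \<in> {g \<in> special m D X. word_length g = 0} \<longleftrightarrow> g \<in> {elem []}"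
      unfolding special_level_mem using wlen_le[of "[]"] cox_elem_eq by fastforce
  qed
  then show ?thesis unfolding poinc_def gen_fps_def by simp
qed

lemma min_rep_of_no_descent:
  assumes Y: "Y \<subseteq> X" and X: "X \<subseteq> D" and g: "g \<in> special m D X" "no_descent_in Y g"
  obtains u where "u \<in> lists X" "g = elem u" "min_rep Y u"
proof -
  obtain u where u: "u \<in> lists X" "g = elem u" using g(1) unfolding special_mem by blast
  have uD: "u \<in> lists D" using u(1) X lists_mono by blast
  have "\<forall>s\<in>Y. \<not> descent u s" using no_descent_in_elem[OF uD] Y X g(2) u(2) by auto
  then show ?thesis using that u no_descent_min_rep[OF _ uD] Y X by auto
qed

lemma coset_pair_rep:
  assumes Y: "Y \<subseteq> X" and X: "X \<subseteq> D"
    and g: "g \<in> {g \<in> special m D X. no_descent_in Y g}" and h: "h \<in> special m D Y"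
  obtains u v where "u \<in> lists X" "v \<in> lists Y" "min_rep Y u" "g = elem u" "h = elem v"
    "elem_mult g h = elem (u@v)"
proof -
  obtain u where u: "u \<in> lists X" "g = elem u" "min_rep Y u"
    using g by (auto elim: min_rep_of_no_descent[OF Y X])
  obtain v where v: "v \<in> lists Y" "h = elem v" using h unfolding special_mem by blast
  have "u \<in> lists D" "v \<in> lists D" using u(1) v(1) X Y lists_mono by blast+
  then show ?thesis using that u v elem_mult_elem by blast
qed

lemma coset_factorization_length:
  assumes Y: "Y \<subseteq> X" and X: "X \<subseteq> D"
    and g: "g \<in> {g \<in> special m D X. no_descent_in Y g}" and h: "h \<in> special m D Y"
  shows "word_length (elem_mult g h) = word_length g + word_length h"
proof -
  obtain u v where uv: "u \<in> lists X" "v \<in> lists Y" "min_rep Y u" "g = elem u" "h = elem v"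
    "elem_mult g h = elem (u@v)" using coset_pair_rep[OF Y X g h] .
  have "u \<in> lists D" using uv(1) X lists_mono by blast
  then show ?thesis using wlen_append_min_rep[of Y u v] uv Y X word_length_elem by simp
qed

lemma coset_factorization_inj:
  assumes Y: "Y \<subseteq> X" and X: "X \<subseteq> D"
    and g: "g \<in> {g \<in> special m D X. no_descent_in Y g}" "h \<in> special m D Y"
    and g': "g' \<in> {g \<in> special m D X. no_descent_in Y g}" "h' \<in> special m D Y"
    and eq: "elem_mult g h = elem_mult g' h'"
  shows "g = g' \<and> h = h'"
proof -
  have YD: "Y \<subseteq> D" using Y X by simp
  obtain u v where uv: "u \<in> lists X" "v \<in> lists Y" "min_rep Y u" "g = elem u" "h = elem v"
    "elem_mult g h = elem (u@v)" using coset_pair_rep[OF Y X g] .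
  obtain u' v' where uv': "u' \<in> lists X" "v' \<in> lists Y" "min_rep Y u'" "g' = elem u'" "h' = elem v'"
    "elem_mult g' h' = elem (u'@v')" using coset_pair_rep[OF Y X g'] .
  have uD: "u \<in> lists D" "u' \<in> lists D" and vD: "v \<in> lists D" "v' \<in> lists D"
    using uv uv' X YD lists_mono by blast+
  have "elem (u@v) = elem (u'@v')" using eq uv(6) uv'(6) by simp
  then have e: "weq (u@v) (u'@v')" by (simp only: elem_eq_iff)
  have uu: "weq u u'" using min_rep_unique[OF YD uD(1) uv(3) uD(2) uv'(3) uv(2) uv'(2) e] .
  have "weq (u@v) (u@v')" using weq_trans[OF e weq_cong_r[OF weq_sym[OF uu] vD(2)]] .
  then have vv: "weq v v'" using weq_cancel_l uD(1) vD(1) by blast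
  have "g = g'" using uv(4) uv'(4) cox_elem_eq[OF uu] by (simp only:)
  moreover have "h = h'" using uv(5) uv'(5) cox_elem_eq[OF vv] by (simp only:)
  ultimately show ?thesis ..
qed

lemma coset_factorization:
  assumes Y: "Y \<subseteq> X" and X: "X \<subseteq> D"
  shows "bij_betw (\<lambda>(g, h). elem_mult g h) ({g \<in> special m D X. no_descent_in Y g} \<times> special m D Y)
           (special m D X)"
proof (rule bij_betw_imageI)
  have YD: "Y \<subseteq> D" using Y X by simp
  let ?A = "{g \<in> special m D X. no_descent_in Y g}"
  show "inj_on (\<lambda>(g, h). elem_mult g h) (?A \<times> special m D Y)"
  proof (rule inj_onI)
    fix p p' assume pp: "p \<in> ?A \<times> special m D Y" "p' \<in> ?A \<times> special m D Y"
      and eq: "(\<lambda>(g, h). elem_mult g h) p = (\<lambda>(g, h). elem_mult g h) p'"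
    obtain g h g' h' where p: "p = (g, h)" "p' = (g', h')" by fastforce
    have "g = g' \<and> h = h'"
      using pp eq unfolding p by (intro coset_factorization_inj[OF Y X]) simp_all
    then show "p = p'" unfolding p by simp
  qed
  show "(\<lambda>(g, h). elem_mult g h) ` (?A \<times> special m D Y) = special m D X"
  proof (intro equalityI subsetI)
    fix x assume "x \<in> (\<lambda>(g, h). elem_mult g h) ` (?A \<times> special m D Y)"
    then obtain p where p: "p \<in> ?A \<times> special m D Y" "x = (\<lambda>(g, h). elem_mult g h) p" by blast
    then obtain g h where g: "g \<in> ?A" "h \<in> special m D Y" and x: "x = elem_mult g h"
      by (cases p) auto
    obtain u v where uv: "u \<in> lists X" "v \<in> lists Y" "min_rep Y u" "g = elem u" "h = elem v"
      "elem_mult g h = elem (u@v)" using coset_pair_rep[OF Y X g] .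
    have "u @ v \<in> lists X" using uv(1,2) Y by (auto simp: in_lists_conv_set)
    then show "x \<in> special m D X" using x uv(6) unfolding special_mem by blast
  next
    fix x assume "x \<in> special m D X"
    then obtain w where w: "w \<in> lists X" "x = elem w" unfolding special_mem by blast
    obtain w0 z where dc: "w0 \<in> lists X" "min_rep Y w0" "z \<in> lists Y" "weq w (w0@z)"
      using coset_decomp[OF Y X w(1)] by blast
    have w0D: "w0 \<in> lists D" and zD: "z \<in> lists D" using dc(1,3) X YD lists_mono by blast+
    have "no_descent_in Y (elem w0)"
      using no_descent_in_elem[OF w0D YD] min_rep_no_descent[OF dc(2)] by blast
    then have "elem w0 \<in> ?A" using dc(1) unfolding special_mem by blast
    moreover have "elem z \<in> special m D Y" using dc(3) unfolding special_mem by blast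
    moreover have "x = elem_mult (elem w0) (elem z)"
      using elem_mult_elem[OF w0D zD] w(2) cox_elem_eq[OF dc(4)] by simp
    ultimately show "x \<in> (\<lambda>(g, h). elem_mult g h) ` (?A \<times> special m D Y)"
      by (intro image_eqI[of _ _ "(elem w0, elem z)"]) simp_all
  qed
qed

lemma poinc_factor: assumes Y: "Y \<subseteq> X" and X: "X \<subseteq> D" shows "poinc X = poinc_min X Y * poinc Y"
  unfolding poinc_def poinc_min_def
proof (rule gen_fps_product[OF coset_factorization[OF Y X]])
  fix g h assume "g \<in> {g \<in> special m D X. no_descent_in Y g}" "h \<in> special m D Y"
  then show "word_length ((\<lambda>(g, h). elem_mult g h) (g, h)) = word_length g + word_length h"
    using coset_factorization_length[OF Y X] by simp
next
  fix n
  show "finite {g \<in> {g \<in> special m D X. no_descent_in Y g}. word_length g = n}"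
    by (rule finite_subset[OF _ special_level_finite[OF X, of n]]) blast
next
  fix n
  show "finite {h \<in> special m D Y. word_length h = n}" using special_level_finite[of Y n] Y X by simp
qed

text \<open>Steinberg's alternating sum.  For \<open>g \<in> W_X\<close>, the \<open>Y \<subseteq> X\<close> without descents of \<open>g\<close> are
  the subsets of \<open>X - Des(g)\<close>; when \<open>W_X\<close> is infinite, \<open>Des(g) \<noteq> X\<close> by the longest element
  argument, so their alternating count vanishes.\<close>
lemma alternating_no_descent:
  assumes X: "X \<subseteq> D" and inf: "infinite (special m D X)" and g: "g \<in> special m D X"
  shows "(\<Sum>Y\<in>{Y \<in> Pow X. no_descent_in Y g}. (-1::real) ^ card Y) = 0"
proof -
  have fX: "finite X" using X finD finite_subset by blast
  obtain w where w: "w \<in> lists X" "g = elem w" using g unfolding special_mem by blast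
  have wD: "w \<in> lists D" using w(1) X lists_mono by blast
  define De where "De = {s\<in>X. descent w s}"
  have "X - De \<noteq> {}"
  proof
    assume "X - De = {}"
    then have "\<forall>s\<in>X. descent w s" unfolding De_def by blast
    then show False using longest_finite[OF X w(1)] inf by blast
  qed
  moreover have "{Y \<in> Pow X. no_descent_in Y g} = Pow (X - De)"
    using no_descent_in_elem[OF wD] X w(2) unfolding De_def by (auto simp: subset_iff)
  ultimately show ?thesis using sum_pow_alt0[of "X - De"] fX by simp
qed

lemma poinc_min_alternating:
  assumes X: "X \<subseteq> D" and inf: "infinite (special m D X)"
  shows "(\<Sum>Y\<in>Pow X. fps_const ((-1) ^ card Y) * poinc_min X Y) = 0"
  unfolding poinc_min_def
proof (rule gen_fps_alternating)
  show "finite (Pow X)" using finD X finite_subset by blast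
qed (use special_level_finite[OF X] alternating_no_descent[OF X inf] in auto)

section \<open>The value at infinity of \<open>1/W_X(t)\<close>\<close>

definition euler_fin :: "'a set \<Rightarrow> real" where
  "euler_fin X = (\<Sum>Y\<in>{Y \<in> Pow X. finite (special m D Y)}. (-1) ^ card Y)"

definition poinc_poly :: "'a set \<Rightarrow> real poly" where
  "poinc_poly X = (\<Sum>g\<in>special m D X. monom 1 (word_length g))"

lemma poinc_poly: assumes fin: "finite (special m D X)"
  shows "poinc X = fps_of_poly (poinc_poly X)"
proof (rule fps_ext)
  fix n
  have "coeff (poinc_poly X) n = (\<Sum>g\<in>special m D X. if word_length g = n then 1 else 0)"
    unfolding poinc_poly_def by (simp add: coeff_sum coeff_monom)
  also have "\<dots> = real (card {g \<in> special m D X. word_length g = n})"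
    using sum.inter_filter[OF fin, of "\<lambda>_. 1::real"] by simp
  finally show "poinc X $ n = fps_of_poly (poinc_poly X) $ n" unfolding poinc_def gen_fps_def by simp
qed

lemma degree_poinc_poly:
  assumes X: "X \<subseteq> D" and fin: "finite (special m D X)"
  shows "degree (poinc_poly X) = 0 \<longleftrightarrow> X = {}"
proof -
  have P: "poinc X = fps_of_poly (poinc_poly X)" using poinc_poly[OF fin] .
  have coeff_n: "coeff (poinc_poly X) n = real (card {g \<in> special m D X. word_length g = n})" for n
  proof -
    have "coeff (poinc_poly X) n = poinc X $ n" unfolding P by simp
    then show ?thesis unfolding poinc_def gen_fps_def by simp
  qed
  show ?thesis
  proof
    assume deg: "degree (poinc_poly X) = 0"
    show "X = {}"
    proof (rule ccontr)
      assume "X \<noteq> {}"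
      then obtain s where s: "s \<in> X" by blast
      then have "elem [s] \<in> {g \<in> special m D X. word_length g = 1}"
        unfolding special_level_mem using wlen_single[of s] X by (intro bexI[of _ "[s]"]) auto
      then have "card {g \<in> special m D X. word_length g = 1} > 0"
        using special_level_finite[OF X] card_gt_0_iff by blast
      then show False using coeff_n[of 1] deg coeff_eq_0[of "poinc_poly X" 1] by simp
    qed
  next
    assume X0: "X = {}"
    have "coeff (poinc_poly X) n = 0" if "n > 0" for n
      using that wlen_le[of "[]"] coeff_n[of n] unfolding X0 special_empty by (simp add: word_length_elem)
    then show "degree (poinc_poly X) = 0" by (meson degree_le le_zero_eq)
  qed
qed

text \<open>For finite \<open>W_X\<close> the series is a polynomial with constant term 1, of positive degree
  unless \<open>X = {}\<close>; this matches \<open>euler_fin X\<close>, which is 1 for \<open>X = {}\<close> and 0 otherwise.\<close>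
lemma infval_poinc_finite:
  assumes X: "X \<subseteq> D" and fin: "finite (special m D X)"
  shows "infval (inverse (poinc X)) (euler_fin X)"
proof -
  have fX: "finite X" using X finD finite_subset by blast
  have "finite (special m D Y)" if "Y \<subseteq> X" for Y
    using special_mono[OF that] fin finite_subset by blast
  then have eu: "euler_fin X = (\<Sum>Y\<in>Pow X. (-1::real) ^ card Y)" unfolding euler_fin_def
    by (intro sum.cong) auto
  have P: "poinc X = fps_of_poly (poinc_poly X)" using poinc_poly[OF fin] .
  have c0: "coeff (poinc_poly X) 0 = 1" using poinc_0[OF X] unfolding P by simp
  have "degree (poinc_poly X) = 0 \<longleftrightarrow> X = {}" using degree_poinc_poly[OF X fin] .
  moreover have "X \<noteq> {} \<Longrightarrow> euler_fin X = 0" using eu sum_pow_alt0[OF fX] by simp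
  moreover have "X = {} \<Longrightarrow> euler_fin X = 1" using eu by simp
  ultimately have "euler_fin X = (if degree (poinc_poly X) = 0 then 1 else 0)" by auto
  then show ?thesis using infval_inv_poly[OF c0] unfolding P by simp
qed

text \<open>For infinite \<open>W_X\<close>, dividing Steinberg's identity by \<open>W_X(t)\<close> and using
  \<open>W_X^Y(t) = W_X(t) / W_Y(t)\<close> expresses \<open>1/W_X(t)\<close> through the \<open>1/W_Y(t)\<close>, \<open>Y \<subset> X\<close>.\<close>
lemma inverse_poinc_recursion:
  assumes X: "X \<subseteq> D" and inf: "infinite (special m D X)"
  shows "inverse (poinc X)
    = fps_const (- ((-1) ^ card X)) * (\<Sum>Y\<in>Pow X - {X}. fps_const ((-1) ^ card Y) * inverse (poinc Y))"
proof -
  let ?c = "\<lambda>Y. (-1::real) ^ card Y"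
  have fP: "finite (Pow X)" using X finD finite_subset by blast
  have q: "poinc_min X Y = poinc X * inverse (poinc Y)" if "Y \<in> Pow X" for Y
  proof -
    have "poinc Y * inverse (poinc Y) = 1" using inverse_mult_eq_1'[of "poinc Y"] poinc_0 that X by auto
    then show ?thesis using poinc_factor[of Y X] that X by (simp add: mult.assoc)
  qed
  have "poinc X * (\<Sum>Y\<in>Pow X. fps_const (?c Y) * inverse (poinc Y))
      = (\<Sum>Y\<in>Pow X. fps_const (?c Y) * poinc_min X Y)"
    unfolding sum_distrib_left using q by (intro sum.cong) (auto simp: algebra_simps)
  also have "\<dots> = 0" using poinc_min_alternating[OF X inf] .
  finally have "(\<Sum>Y\<in>Pow X. fps_const (?c Y) * inverse (poinc Y)) = 0"
    using poinc_0[OF X] by (metis fps_zero_nth mult_eq_0_iff zero_neq_one)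
  moreover have "(\<Sum>Y\<in>Pow X. fps_const (?c Y) * inverse (poinc Y))
      = fps_const (?c X) * inverse (poinc X) + (\<Sum>Y\<in>Pow X - {X}. fps_const (?c Y) * inverse (poinc Y))"
    by (rule sum.remove[OF fP]) simp
  ultimately have "fps_const (?c X) * inverse (poinc X)
      = - (\<Sum>Y\<in>Pow X - {X}. fps_const (?c Y) * inverse (poinc Y))"
    by (simp add: eq_neg_iff_add_eq_0)
  then have "fps_const (?c X) * (fps_const (?c X) * inverse (poinc X))
      = fps_const (- ?c X) * (\<Sum>Y\<in>Pow X - {X}. fps_const (?c Y) * inverse (poinc Y))"
    by (simp add: fps_const_neg[symmetric] del: fps_const_neg)
  moreover have "fps_const (?c X) * (fps_const (?c X) * inverse (poinc X)) = inverse (poinc X)"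
    by (simp add: mult.assoc[symmetric] fps_const_mult[symmetric] power_mult_distrib[symmetric])
  ultimately show ?thesis by simp
qed

lemma infval_poinc: assumes "X \<subseteq> D" shows "infval (inverse (poinc X)) (euler_fin X)"
proof -
  have "finite X" using assms finD finite_subset by blast
  then show ?thesis using assms
  proof (induction X rule: finite_psubset_induct)
    case (psubset X)
    show ?case
    proof (cases "finite (special m D X)")
      case True then show ?thesis using infval_poinc_finite[OF psubset.prems] by blast
    next
      case False
      let ?c = "\<lambda>Y. (-1::real) ^ card Y"
      have "infval (inverse (poinc Y)) (euler_fin Y)" if "Y \<in> Pow X - {X}" for Y
        using psubset.IH[of Y] that psubset.prems by auto
      then have "infval (inverse (poinc X)) (- ?c X * (\<Sum>Y\<in>Pow X - {X}. ?c Y * euler_fin Y))"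
        unfolding inverse_poinc_recursion[OF psubset.prems False]
        using psubset.hyps(1) by (intro infval_scale infval_sum) auto
      moreover have "(\<Sum>Y\<in>Pow X - {X}. ?c Y * euler_fin Y) = - ?c X * euler_fin X"
        unfolding euler_fin_def using alternating_subset_recursion[OF psubset.hyps(1), of "\<lambda>Y. finite (special m D Y)"]
          False by simp
      ultimately show ?thesis by (simp add: mult.assoc[symmetric] power_mult_distrib[symmetric])
    qed
  qed
qed

text \<open>Since the alternating sum over all subsets of \<open>D \<noteq> {}\<close> vanishes, \<open>euler_fin D\<close> is minus
  the alternating sum over the subsets \<open>X\<close> with \<open>W_X\<close> infinite, \<open>D\<close> itself included.\<close>
lemma euler_fin_infinite:
  assumes inf: "infinite (coxW m D)"
  shows "euler_fin D = (-1) ^ (card D + 1) - (\<Sum>X\<in>{X. X \<subset> D \<and> infinite (special m D X)}. (-1) ^ card X)"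
proof -
  let ?c = "\<lambda>Y. (-1::real) ^ card Y"
  let ?I = "{X. X \<subset> D \<and> infinite (special m D X)}" and ?F = "{Y \<in> Pow D. finite (special m D Y)}"
  have Dne: "D \<noteq> {}" using inf special_empty by auto
  have fI: "finite ?I" and fF: "finite ?F" using finD by (auto intro: finite_subset[of _ "Pow D"])
  have e1: "Pow D = ?F \<union> insert D ?I" and dj: "?F \<inter> insert D ?I = {}" using inf by auto
  have "(\<Sum>Y\<in>?F \<union> insert D ?I. ?c Y) = (\<Sum>Y\<in>?F. ?c Y) + (\<Sum>Y\<in>insert D ?I. ?c Y)"
    by (rule sum.union_disjoint[OF fF _ dj]) (use fI in simp)
  also have "(\<Sum>Y\<in>insert D ?I. ?c Y) = ?c D + (\<Sum>Y\<in>?I. ?c Y)" by (rule sum.insert[OF fI]) simp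
  finally have "(\<Sum>Y\<in>Pow D. ?c Y) = (\<Sum>Y\<in>?F. ?c Y) + (?c D + (\<Sum>Y\<in>?I. ?c Y))"
    using arg_cong[OF e1, of "sum ?c"] by simp
  then show ?thesis using sum_pow_alt0[OF finD Dne] unfolding euler_fin_def by simp
qed

text \<open>In a 1-terminal group every infinite proper special subgroup \<open>W_X\<close> has \<open>|X| = |D| - 1\<close>:
  otherwise \<open>X\<close> could be enlarged by one generator to a proper \<open>X'\<close> with \<open>W_X \<subset> W_X'\<close> infinite.\<close>
lemma one_terminal_card:
  assumes ot: "one_terminal m D" and XD: "X \<subset> D" and infX: "infinite (special m D X)"
  shows "card X = card D - 1"
proof (rule ccontr)
  assume ne: "card X \<noteq> card D - 1"
  obtain d where d: "d \<in> D" "d \<notin> X" using XD by blast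
  have "card (insert d X) = Suc (card X)" using d(2) XD finD finite_subset by fastforce
  moreover have "card X < card D" using psubset_card_mono[OF finD XD] .
  ultimately have "card (insert d X) < card D" using ne by simp
  then have X'D: "insert d X \<subset> D" using d(1) XD by auto
  have "infinite (special m D (insert d X))" using special_mono[of X "insert d X"] infX finite_subset by blast
  moreover have "X \<subset> insert d X" using d(2) by blast
  ultimately show False using ot X'D infX unfolding one_terminal_def by blast
qed

lemma one_terminal_alternating_sum:
  assumes ot: "one_terminal m D"
  shows "(\<Sum>X\<in>{X. X \<subset> D \<and> infinite (special m D X)}. (-1::real) ^ card X)
      = - real (card {X. X \<subset> D \<and> infinite (special m D X)}) * (-1) ^ card D"
proof -
  let ?I = "{X. X \<subset> D \<and> infinite (special m D X)}"
  have "D \<noteq> {}" using ot special_empty unfolding one_terminal_def by auto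
  then obtain k where k: "card D = Suc k" using finD by (cases "card D") auto
  have "(\<Sum>X\<in>?I. (-1::real) ^ card X) = (\<Sum>X\<in>?I. (-1) ^ k)"
    using one_terminal_card[OF ot] k by (intro sum.cong) auto
  then show ?thesis using k by simp
qed

end

theorem mainTheorem9:
  fixes m :: "'a \<Rightarrow> 'a \<Rightarrow> nat" and D :: "'a set"
    and ns :: "nat list" and Sp :: "real poly"
  assumes cox: "coxeter_matrix m D"
    and inf: "infinite (coxW m D)"
    and ns2: "\<forall>n\<in>set ns. n \<ge> 2"
    and quot: "fps_of_poly Sp * poincare m D = fps_of_poly (prod_list (map qint ns))"
  defines "N \<equiv> (\<Sum>n\<leftarrow>ns. n - 1)"
  shows "degree Sp \<le> N
    \<and> coeff Sp N = (-1) ^ (card D + 1)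
          - (\<Sum>X\<in>{X. X \<subset> D \<and> infinite (special m D X)}. (-1) ^ card X)
    \<and> ((\<forall>X. X \<subset> D \<longrightarrow> finite (special m D X)) \<longrightarrow> coeff Sp N = (-1) ^ (card D + 1))
    \<and> (one_terminal m D \<longrightarrow>
         coeff Sp N = (-1) ^ card D * (real (card {X. X \<subset> D \<and> infinite (special m D X)}) - 1))"
proof -
  interpret coxeter m D using cox by unfold_locales
  let ?I = "{X. X \<subset> D \<and> infinite (special m D X)}"
  have R: "degree (prod_list (map qint ns)) = N" "lead_coeff (prod_list (map qint ns)) = 1"
    using prod_qint[of ns] ns2 unfolding N_def by fastforce+
  have top: "degree Sp \<le> N \<and> coeff Sp N = euler_fin D"
    using top_coeff_from_infval[OF quot[unfolded poincare_poinc] poinc_0 infval_poinc R] by simp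
  then have formula1: "coeff Sp N = (-1) ^ (card D + 1) - (\<Sum>X\<in>?I. (-1) ^ card X)"
    using euler_fin_infinite[OF inf] by simp
  have formula2: "coeff Sp N = (-1) ^ (card D + 1)" if "\<forall>X. X \<subset> D \<longrightarrow> finite (special m D X)"
  proof -
    have "?I = {}" using that by auto
    then have "(\<Sum>X\<in>?I. (-1::real) ^ card X) = 0" by (simp only: sum.empty)
    then show ?thesis using formula1 by simp
  qed
  have formula3: "coeff Sp N = (-1) ^ card D * (real (card ?I) - 1)" if "one_terminal m D"
    using formula1 one_terminal_alternating_sum[OF that] by (simp add: algebra_simps)
  show ?thesis using top formula1 formula2 formula3 by blast
qed

end
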